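(* Let $0<m<M$, let $f:[m,M]\to(0,\infty)$ be convex and either increasing or decreasing on $[m,M]$, let $A\in\mathcal{B}(\mathcal{H})$ satisfy $mI\le A\le MI$, and let $\varphi:\mathcal{B}(\mathcal{H})\to\mathcal{B}(\mathcal{K})$ be a positive linear map with $\varphi(I)=I$. Then for any $t_0\in(m,M)$ at which $f'(t_0)$ exists and $f'(t_0)\ne0$, $$\varphi(f(A))+\varphi(A_{\min})\le \alpha(f,t_0)f(\varphi(A))+\beta(f,t_0)$$ and $$f(\varphi(A))+(\varphi(A))_{\min}\le \alpha(f,t_0)\varphi(f(A))+\beta(f,t_0).$$
   Context: $\mathcal{H},\mathcal{K}$ are complex Hilbert spaces, $X\le Y$ means $Y-X$ is positive semidefinite, and operator functions are defined by continuous functional calculus. $a_f=\frac{f(M)-f(m)}{M-m}$, $b_f=\frac{Mf(m)-mf(M)}{M-m}$, $\alpha(f,t_0)=\frac{a_f}{f'(t_0)}$, $\beta(f,t_0)=a_ft_0+b_f-\frac{a_f\,f(t_0)}{f'(t_0)}$. For a self-adjoint operator $X$ with spectrum in $[m,M]$, $X_{\min}:=\frac{1}{M-m}\left(\frac{f(m)+f(M)}{2}-f\left(\frac{m+M}{2}\right)\right)\left(M-m-|M+m-2X|\right)$, i.e. $X_{\min}$ is the functional calculus of $t\mapsto\frac{2\min\{t-m,M-t\}}{M-m}\left(\frac{f(m)+f(M)}{2}-f\left(\frac{m+M}{2}\right)\right)$. *)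

theory Defs
  imports "HOL-Analysis.Analysis" "HOL-Computational_Algebra.Polynomial"
begin

text \<open>HOL-Analysis only provides real inner product spaces, so we introduce complex
  inner product spaces (inner product conjugate-linear in the first argument) and
  complex Hilbert spaces (complete ones) as type classes.\<close>

class complex_inner = real_normed_vector +
  fixes cscale :: "complex \<Rightarrow> 'a \<Rightarrow> 'a"
    and cinner :: "'a \<Rightarrow> 'a \<Rightarrow> complex"
  assumes cscale_add_right: "cscale a (x + y) = cscale a x + cscale a y"
    and cscale_add_left: "cscale (a + b) x = cscale a x + cscale b x"
    and cscale_cscale: "cscale a (cscale b x) = cscale (a * b) x"
    and cscale_one: "cscale 1 x = x"
    and scaleR_cscale: "scaleR r x = cscale (complex_of_real r) x"
    and cinner_commute: "cinner x y = cnj (cinner y x)"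
    and cinner_add_left: "cinner (x + y) z = cinner x z + cinner y z"
    and cinner_cscale_left: "cinner (cscale a x) y = cnj a * cinner x y"
    and cinner_self_Im: "Im (cinner x x) = 0"
    and cinner_self_nonneg: "0 \<le> Re (cinner x x)"
    and cinner_self_eq_0: "cinner x x = 0 \<longleftrightarrow> x = 0"
    and norm_eq_sqrt_cinner: "norm x = sqrt (Re (cinner x x))"

class chilbert_space = complex_inner + complete_space

text \<open>Operators are represented as functions on the space; B(H) consists of the
  complex-linear bounded ones.\<close>

definition clinear_op :: "('a::complex_inner \<Rightarrow> 'a) \<Rightarrow> bool" where
  "clinear_op T \<longleftrightarrow> (\<forall>x y. T (x + y) = T x + T y) \<and> (\<forall>c x. T (cscale c x) = cscale c (T x))"

definition bounded_op :: "('a::complex_inner \<Rightarrow> 'a) \<Rightarrow> bool" where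
  "bounded_op T \<longleftrightarrow> clinear_op T \<and> (\<exists>K. \<forall>x. norm (T x) \<le> K * norm x)"

definition op_le :: "('a::complex_inner \<Rightarrow> 'a) \<Rightarrow> ('a \<Rightarrow> 'a) \<Rightarrow> bool" where
  "op_le X Y \<longleftrightarrow> (\<forall>x. Im (cinner x (Y x - X x)) = 0 \<and> 0 \<le> Re (cinner x (Y x - X x)))"

definition scal_op :: "real \<Rightarrow> 'a::complex_inner \<Rightarrow> 'a" where
  "scal_op c = (\<lambda>x. scaleR c x)"

text \<open>Real spectrum: the reals \<open>t\<close> for which \<open>T - t I\<close> is not invertible
  (for a bounded operator bijectivity already gives a bounded inverse).\<close>

definition op_spectrum :: "('a::complex_inner \<Rightarrow> 'a) \<Rightarrow> real set" where
  "op_spectrum T = {t. \<not> bij (\<lambda>x. T x - scaleR t x)}"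

definition poly_op :: "real poly \<Rightarrow> ('a::complex_inner \<Rightarrow> 'a) \<Rightarrow> 'a \<Rightarrow> 'a" where
  "poly_op p T = (\<lambda>x. \<Sum>i\<le>degree p. scaleR (coeff p i) ((T ^^ i) x))"

text \<open>Continuous functional calculus of a self-adjoint operator \<open>T\<close>: \<open>f(T)\<close> is the
  operator-norm limit of \<open>p_n(T)\<close> for every sequence of real polynomials \<open>p_n\<close>
  converging uniformly to \<open>f\<close> on the spectrum of \<open>T\<close>.\<close>

definition cfc :: "('a::complex_inner \<Rightarrow> 'a) \<Rightarrow> (real \<Rightarrow> real) \<Rightarrow> 'a \<Rightarrow> 'a" where
  "cfc T f = (THE B. bounded_op B \<and>
     (\<forall>P :: nat \<Rightarrow> real poly.
        (\<forall>e>0. \<exists>N. \<forall>n\<ge>N. \<forall>t\<in>op_spectrum T. \<bar>poly (P n) t - f t\<bar> < e) \<longrightarrow>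
        ((\<lambda>n. onorm (\<lambda>x. poly_op (P n) T x - B x)) \<longlonglongrightarrow> 0)))"

definition positive_unital_linear_map ::
  "(('a::complex_inner \<Rightarrow> 'a) \<Rightarrow> ('b::complex_inner \<Rightarrow> 'b)) \<Rightarrow> bool" where
  "positive_unital_linear_map \<phi> \<longleftrightarrow>
     (\<forall>X. bounded_op X \<longrightarrow> bounded_op (\<phi> X)) \<and>
     (\<forall>X Y. bounded_op X \<longrightarrow> bounded_op Y \<longrightarrow> \<phi> (\<lambda>x. X x + Y x) = (\<lambda>y. \<phi> X y + \<phi> Y y)) \<and>
     (\<forall>c X. bounded_op X \<longrightarrow> \<phi> (\<lambda>x. cscale c (X x)) = (\<lambda>y. cscale c (\<phi> X y))) \<and>
     (\<forall>X. bounded_op X \<longrightarrow> op_le (\<lambda>x. 0) X \<longrightarrow> op_le (\<lambda>y. 0) (\<phi> X)) \<and>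
     \<phi> (\<lambda>x. x) = (\<lambda>y. y)"

definition a_f :: "(real \<Rightarrow> real) \<Rightarrow> real \<Rightarrow> real \<Rightarrow> real" where
  "a_f f m M = (f M - f m) / (M - m)"

definition b_f :: "(real \<Rightarrow> real) \<Rightarrow> real \<Rightarrow> real \<Rightarrow> real" where
  "b_f f m M = (M * f m - m * f M) / (M - m)"

definition alpha_f :: "(real \<Rightarrow> real) \<Rightarrow> real \<Rightarrow> real \<Rightarrow> real \<Rightarrow> real" where
  "alpha_f f m M t0 = a_f f m M / deriv f t0"

definition beta_f :: "(real \<Rightarrow> real) \<Rightarrow> real \<Rightarrow> real \<Rightarrow> real \<Rightarrow> real" where
  "beta_f f m M t0 = a_f f m M * t0 + b_f f m M - a_f f m M * f t0 / deriv f t0"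

definition op_min :: "(real \<Rightarrow> real) \<Rightarrow> real \<Rightarrow> real \<Rightarrow> ('a::complex_inner \<Rightarrow> 'a) \<Rightarrow> 'a \<Rightarrow> 'a" where
  "op_min f m M X = cfc X (\<lambda>t. 2 * min (t - m) (M - t) / (M - m) *
                              ((f m + f M) / 2 - f ((m + M) / 2)))"

end

(* For convex f, Jensen's inequality on the half of [m, M] containing t refines the chord bound
   to f t + x_min t <= a_f t + b_f, where x_min is the scalar function defining X_min.  The tangent
   line at t0, scaled by alpha = a_f / f'(t0), gives a_f t + b_f <= alpha f t + beta; here
   alpha >= 0 because f is monotone, so a_f and f'(t0) have the same sign.  Both scalar
   inequalities become operator inequalities by monotonicity of the functional calculus, and the
   affine middle term can be moved across Phi because Phi (a A + b) = a Phi(A) + b.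

   A real
   polynomial without zeros on the spectrum of T gives an invertible p(T), since p factors into
   linear factors at real roots off the spectrum and coercive quadratic factors at non-real roots.
   Hence p >= 0 on the spectrum implies p(T) >= 0, so ||p(T)|| <= sup |p| over the spectrum, and
   Weierstrass approximation extends everything to continuous functions. *)

theory Submission
  imports Defs "HOL-Computational_Algebra.Fundamental_Theorem_Algebra"
begin

section \<open>Complex inner product spaces\<close>

lemma cinner_add_right: "cinner (x::'a::complex_inner) (y + z) = cinner x y + cinner x z"
  by (metis cinner_commute cinner_add_left complex_cnj_add)

lemma cinner_cscale_right: "cinner x (cscale a y) = a * cinner x y"
  by (metis cinner_commute cinner_cscale_left complex_cnj_cnj complex_cnj_mult)

lemma cinner_zero_left [simp]: "cinner 0 y = 0"
  using cinner_add_left[of 0 0 y] by simp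

lemma cinner_zero_right [simp]: "cinner x 0 = 0"
  using cinner_add_right[of x 0 0] by simp

lemma cinner_minus_left: "cinner (- x) y = - cinner x y"
  using cinner_add_left[of x "- x" y] by (simp add: add_eq_0_iff)

lemma cinner_minus_right: "cinner x (- y) = - cinner x y"
  using cinner_add_right[of x y "- y"] by (simp add: add_eq_0_iff)

lemma cinner_diff_left: "cinner (x - y) z = cinner x z - cinner y z"
  using cinner_add_left[of x "- y" z] by (simp add: cinner_minus_left)

lemma cinner_diff_right: "cinner x (y - z) = cinner x y - cinner x z"
  using cinner_add_right[of x y "- z"] by (simp add: cinner_minus_right)

lemma cinner_scaleR_left: "cinner (r *\<^sub>R x) y = of_real r * cinner x y"
  by (simp add: scaleR_cscale cinner_cscale_left)

lemma cinner_scaleR_right: "cinner x (r *\<^sub>R y) = of_real r * cinner x y"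
  by (simp add: scaleR_cscale cinner_cscale_right)

lemma cinner_self_eq_norm_power2: "cinner x x = of_real ((norm x)\<^sup>2)"
proof -
  have "(norm x)\<^sup>2 = Re (cinner x x)"
    using norm_eq_sqrt_cinner[of x] cinner_self_nonneg[of x] by simp
  then show ?thesis
    using cinner_self_Im[of x] by (simp add: complex_eq_iff)
qed

lemmas cinner_simps = cinner_add_left cinner_add_right cinner_diff_left cinner_diff_right
  cinner_minus_left cinner_minus_right cinner_scaleR_left cinner_scaleR_right
  cinner_cscale_left cinner_cscale_right

lemma cscale_zero_right [simp]: "cscale a 0 = 0"
  using cscale_add_right[of a 0 0] by simp

lemma norm_cscale: "norm (cscale a x) = cmod a * norm x"
proof -
  have "cinner (cscale a x) (cscale a x) = of_real ((cmod a * norm x)\<^sup>2)"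
    by (simp add: cinner_cscale_left cinner_cscale_right cinner_self_eq_norm_power2[of x]
        power_mult_distrib mult_ac flip: of_real_power complex_norm_square)
  then have "(norm (cscale a x))\<^sup>2 = (cmod a * norm x)\<^sup>2"
    by (simp only: cinner_self_eq_norm_power2 of_real_eq_iff)
  then show ?thesis
    by (simp add: power2_eq_imp_eq)
qed

lemma cinner_cauchy_schwarz: "cmod (cinner x y) \<le> norm x * norm y"
proof (cases "y = 0")
  case False
  define w where "w = cinner y x"
  define n where "n = (norm y)\<^sup>2"
  have n: "n > 0"
    using False by (simp add: n_def)
  have xy: "cinner x y = cnj w"
    by (simp add: w_def flip: cinner_commute)
  \<comment> \<open>expand \<open>0 \<le> \<parallel>n x - w y\<parallel>\<^sup>2\<close>\<close>
  have "0 \<le> Re (cinner (cscale (of_real n) x - cscale w y) (cscale (of_real n) x - cscale w y))"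
    by (rule cinner_self_nonneg)
  also have "\<dots> = n * (n * (norm x)\<^sup>2 - ((Re w)\<^sup>2 + (Im w)\<^sup>2))"
    by (simp add: cinner_simps xy cinner_self_eq_norm_power2[of x] cinner_self_eq_norm_power2[of y]
        flip: w_def n_def)
       (simp add: complex_mult_cnj algebra_simps power2_eq_square)
  finally have "(cmod w)\<^sup>2 \<le> (norm y * norm x)\<^sup>2"
    using n by (simp add: zero_le_mult_iff power_mult_distrib cmod_power2 n_def)
  then have "cmod w \<le> norm y * norm x"
    by (rule power2_le_imp_le) simp
  then show ?thesis
    by (metis xy complex_mod_cnj mult.commute)
qed simp

lemma parallelogram_law:
  fixes x y :: "'a::complex_inner"
  shows "(norm (x + y))\<^sup>2 + (norm (x - y))\<^sup>2 = 2 * (norm x)\<^sup>2 + 2 * (norm y)\<^sup>2"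
proof -
  have "cinner (x + y) (x + y) + cinner (x - y) (x - y) = 2 * cinner x x + 2 * cinner y y"
    by (simp add: cinner_simps)
  then have "complex_of_real ((norm (x + y))\<^sup>2 + (norm (x - y))\<^sup>2) =
      of_real (2 * (norm x)\<^sup>2 + 2 * (norm y)\<^sup>2)"
    by (simp add: cinner_self_eq_norm_power2)
  then show ?thesis
    using of_real_eq_iff by blast
qed

lemma bounded_linear_cinner_right: "bounded_linear (\<lambda>y. cinner (a::'a::complex_inner) y)"
proof (rule bounded_linear_intro[where K = "norm a"])
  show "norm (cinner a x) \<le> norm x * norm a" for x
    using cinner_cauchy_schwarz[of a x] by (simp add: mult.commute)
qed (simp_all add: cinner_add_right cinner_scaleR_right scaleR_conv_of_real)

section \<open>Bounded operators\<close>

lemma clinear_op_add: "clinear_op T \<Longrightarrow> T (x + y) = T x + T y"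
  by (simp add: clinear_op_def)

lemma clinear_op_cscale: "clinear_op T \<Longrightarrow> T (cscale c x) = cscale c (T x)"
  by (simp add: clinear_op_def)

lemma clinear_op_scaleR: "clinear_op T \<Longrightarrow> T (r *\<^sub>R x) = r *\<^sub>R T x"
  by (simp add: clinear_op_def scaleR_cscale)

lemma clinear_op_zero: "clinear_op T \<Longrightarrow> T 0 = 0"
  using clinear_op_scaleR[of T 0 0] by simp

lemma clinear_op_diff: "clinear_op T \<Longrightarrow> T (x - y) = T x - T y"
  using clinear_op_add[of T x "- y"] clinear_op_scaleR[of T "- 1" y] by simp

lemma clinear_op_sum: "clinear_op T \<Longrightarrow> T (sum f S) = (\<Sum>i\<in>S. T (f i))"
  by (induction S rule: infinite_finite_induct) (auto simp: clinear_op_add clinear_op_zero)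

lemmas clinear_op_simps = clinear_op_add clinear_op_diff clinear_op_scaleR clinear_op_cscale
  clinear_op_zero

lemma bounded_op_clinear_op: "bounded_op T \<Longrightarrow> clinear_op T"
  by (simp add: bounded_op_def)

lemma bounded_op_pos_bounded:
  fixes T :: "'a::complex_inner \<Rightarrow> 'a"
  assumes "bounded_op T"
  obtains K where "K > 0" "\<And>x. norm (T x) \<le> K * norm x"
proof -
  obtain K where K: "norm (T x) \<le> K * norm x" for x
    using assms by (auto simp: bounded_op_def)
  have "norm (T x) \<le> (max K 0 + 1) * norm x" for x
  proof -
    have "K * norm x \<le> (max K 0 + 1) * norm x"
      by (intro mult_right_mono) auto
    then show ?thesis
      using K[of x] by linarith
  qed
  then show thesis
    by (rule that[rotated]) simp
qed

lemma bounded_op_bounded_linear: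
  assumes "bounded_op T"
  shows "bounded_linear T"
proof -
  obtain K where "norm (T x) \<le> K * norm x" for x
    using assms by (auto simp: bounded_op_def)
  then show ?thesis
    using bounded_op_clinear_op[OF assms]
    by (intro bounded_linear_intro[where K = K])
      (simp_all add: clinear_op_add clinear_op_scaleR mult.commute)
qed

lemma bounded_op_cscale: "bounded_op (\<lambda>x::'a::complex_inner. cscale c x)"
  unfolding bounded_op_def clinear_op_def
  by (auto simp: cscale_add_right cscale_cscale mult.commute[of c] norm_cscale
      intro!: exI[of _ "cmod c"])

lemma bounded_op_id: "bounded_op (\<lambda>x::'a::complex_inner. x)"
  unfolding bounded_op_def clinear_op_def by (auto intro!: exI[of _ 1])

lemma bounded_op_zero: "bounded_op (\<lambda>x::'a::complex_inner. 0)"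
  unfolding bounded_op_def clinear_op_def by (auto intro!: exI[of _ 0])

lemma bounded_op_add:
  assumes "bounded_op X" "bounded_op Y"
  shows "bounded_op (\<lambda>x. X x + Y x)"
proof -
  obtain K1 K2 where K: "norm (X x) \<le> K1 * norm x" "norm (Y x) \<le> K2 * norm x" for x
    using assms by (auto simp: bounded_op_def)
  have "norm (X x + Y x) \<le> (K1 + K2) * norm x" for x
    using norm_triangle_ineq[of "X x" "Y x"] K[of x] by (simp add: distrib_right)
  then show ?thesis
    using assms by (auto simp: bounded_op_def clinear_op_def cscale_add_right)
qed

lemma bounded_op_compose:
  assumes "bounded_op X" "bounded_op Y"
  shows "bounded_op (\<lambda>x. X (Y x))"
proof -
  obtain K1 where K1: "K1 > 0" "norm (X x) \<le> K1 * norm x" for x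
    using bounded_op_pos_bounded[OF assms(1)] by blast
  obtain K2 where K2: "norm (Y x) \<le> K2 * norm x" for x
    using assms(2) by (auto simp: bounded_op_def)
  have "norm (X (Y x)) \<le> (K1 * K2) * norm x" for x
  proof -
    have "norm (X (Y x)) \<le> K1 * norm (Y x)"
      by (rule K1(2))
    also have "\<dots> \<le> K1 * (K2 * norm x)"
      using K1(1) K2 by (intro mult_left_mono) auto
    finally show ?thesis
      by (simp add: mult.assoc)
  qed
  then show ?thesis
    using assms by (auto simp: bounded_op_def clinear_op_def)
qed

lemma bounded_op_scaleR: "bounded_op X \<Longrightarrow> bounded_op (\<lambda>x. r *\<^sub>R X x)"
  using bounded_op_compose[OF bounded_op_cscale] by (simp add: scaleR_cscale)

lemma bounded_op_diff:
  assumes "bounded_op X" "bounded_op Y"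
  shows "bounded_op (\<lambda>x. X x - Y x)"
  using bounded_op_add[OF assms(1) bounded_op_scaleR[OF assms(2), of "- 1"]] by simp

lemma bounded_op_shift: "bounded_op T \<Longrightarrow> bounded_op (\<lambda>x. T x - c *\<^sub>R x)"
  by (intro bounded_op_diff bounded_op_scaleR bounded_op_id)

lemma bounded_op_scal_op: "bounded_op (scal_op c :: 'a::complex_inner \<Rightarrow> 'a)"
  unfolding scal_op_def by (rule bounded_op_scaleR[OF bounded_op_id])

lemma op_le_trans:
  assumes "op_le X Y" "op_le Y Z"
  shows "op_le X Z"
proof -
  have "cinner x (Z x - X x) = cinner x (Z x - Y x) + cinner x (Y x - X x)" for x
    by (simp add: cinner_diff_right)
  then show ?thesis
    using assms by (simp add: op_le_def)
qed

section \<open>Hermitian and positive operators\<close>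

definition hermitian_op :: "('a::complex_inner \<Rightarrow> 'a) \<Rightarrow> bool" where
  "hermitian_op T \<longleftrightarrow> (\<forall>x y. cinner (T x) y = cinner x (T y))"

definition positive_op :: "('a::complex_inner \<Rightarrow> 'a) \<Rightarrow> bool" where
  "positive_op T \<longleftrightarrow> (\<forall>x. Im (cinner x (T x)) = 0 \<and> 0 \<le> Re (cinner x (T x)))"

lemma op_le_iff_positive_op: "op_le X Y \<longleftrightarrow> positive_op (\<lambda>x. Y x - X x)"
  by (simp add: op_le_def positive_op_def)

lemma hermitian_opD: "hermitian_op T \<Longrightarrow> cinner (T x) y = cinner x (T y)"
  by (simp add: hermitian_op_def)

lemma hermitian_op_quadratic_form_real: "hermitian_op T \<Longrightarrow> Im (cinner x (T x)) = 0"
  using cinner_commute[of x "T x"] by (simp add: hermitian_op_def complex_eq_iff)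

text \<open>Polarization: over \<open>\<complex>\<close> a linear operator is determined by its quadratic form.\<close>

lemma hermitian_opI_quadratic_form_real:
  assumes T: "clinear_op T" and real: "\<And>x. Im (cinner x (T x)) = 0"
  shows "hermitian_op T"
proof -
  define D where "D x y = cinner x (T y) - cinner (T x) y" for x y
  have D_self: "D z z = 0" for z
    using cinner_commute[of z "T z"] real[of z] by (simp add: D_def complex_eq_iff)
  have "D x y = 0" for x y
  proof -
    have "D (x + y) (x + y) = D x x + D x y + D y x + D y y"
      by (simp add: D_def clinear_op_simps[OF T] cinner_simps)
    then have sum: "D x y + D y x = 0"
      by (simp add: D_self)
    have "D (x + cscale \<i> y) (x + cscale \<i> y) = D x x + \<i> * (D x y - D y x) + D y y"
      by (simp add: D_def clinear_op_simps[OF T] cinner_simps algebra_simps)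
    then have "D x y - D y x = 0"
      by (simp add: D_self)
    with sum show ?thesis
      by simp
  qed
  then show ?thesis
    by (simp add: hermitian_op_def D_def)
qed

lemma hermitian_op_shift: "hermitian_op T \<Longrightarrow> hermitian_op (\<lambda>x. T x - c *\<^sub>R x)"
  by (simp add: hermitian_op_def cinner_simps)

lemma hermitian_op_uminus: "hermitian_op T \<Longrightarrow> hermitian_op (\<lambda>x. - T x)"
  by (simp add: hermitian_op_def cinner_simps)

lemma hermitian_op_of_op_le_scal_op:
  assumes "bounded_op T" "op_le (scal_op m) T"
  shows "hermitian_op T"
proof (rule hermitian_opI_quadratic_form_real[OF bounded_op_clinear_op[OF assms(1)]])
  show "Im (cinner x (T x)) = 0" for x
    using assms(2) by (simp add: op_le_def scal_op_def cinner_simps cinner_self_eq_norm_power2)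
qed

lemma hermitian_op_polarization_le:
  fixes S :: "'a::complex_inner \<Rightarrow> 'a"
  assumes S: "clinear_op S" "hermitian_op S"
    and bound: "\<And>x. \<bar>Re (cinner x (S x))\<bar> \<le> s * (norm x)\<^sup>2"
  shows "4 * Re (cinner (S x) y) \<le> 2 * s * ((norm x)\<^sup>2 + (norm y)\<^sup>2)"
proof -
  have "cinner (x + y) (S (x + y)) - cinner (x - y) (S (x - y)) =
      2 * cinner (S x) y + 2 * cinner y (S x)"
    by (simp add: clinear_op_simps[OF S(1)] cinner_simps hermitian_opD[OF S(2)])
  from arg_cong[where f = Re, OF this]
  have "Re (cinner (x + y) (S (x + y))) - Re (cinner (x - y) (S (x - y))) =
      2 * Re (cinner (S x) y) + 2 * Re (cinner y (S x))"
    by simp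
  then have "4 * Re (cinner (S x) y) =
      Re (cinner (x + y) (S (x + y))) - Re (cinner (x - y) (S (x - y)))"
    using cinner_commute[of y "S x"] by simp
  also have "\<dots> \<le> s * ((norm (x + y))\<^sup>2 + (norm (x - y))\<^sup>2)"
    using bound[of "x + y"] bound[of "x - y"] by (simp add: distrib_left abs_le_iff)
  also have "\<dots> = 2 * s * ((norm x)\<^sup>2 + (norm y)\<^sup>2)"
    unfolding parallelogram_law by (simp add: algebra_simps)
  finally show ?thesis .
qed

lemma hermitian_op_norm_le:
  fixes S :: "'a::complex_inner \<Rightarrow> 'a"
  assumes S: "clinear_op S" "hermitian_op S"
    and bound: "\<And>x. \<bar>Re (cinner x (S x))\<bar> \<le> s * (norm x)\<^sup>2"
  shows "norm (S x) \<le> s * norm x"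
proof (cases "S x = 0")
  case False
  then have x: "norm x > 0"
    using clinear_op_zero[OF S(1)] by fastforce
  \<comment> \<open>test the polarization bound against \<open>y = t S x\<close> with \<open>\<parallel>y\<parallel> = \<parallel>x\<parallel>\<close>\<close>
  define t where "t = norm x / norm (S x)"
  have "Re (cinner (S x) (t *\<^sub>R S x)) = norm x * norm (S x)"
    using False by (simp add: t_def cinner_scaleR_right cinner_self_eq_norm_power2 power2_eq_square)
  moreover have "norm (t *\<^sub>R S x) = norm x"
    using False by (simp add: t_def)
  ultimately have "norm x * norm (S x) \<le> norm x * (s * norm x)"
    using hermitian_op_polarization_le[OF S bound, of x "t *\<^sub>R S x"]
    by (simp add: power2_eq_square algebra_simps)
  then show ?thesis
    using x by simp
next
  case True
  have "0 \<le> s * (norm x)\<^sup>2"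
    using bound[of x] abs_ge_zero[of "Re (cinner x (S x))"] by linarith
  then show ?thesis
    using True by (simp add: zero_le_mult_iff)
qed

lemma positive_op_norm_power2_le:
  fixes R :: "'a::complex_inner \<Rightarrow> 'a"
  assumes R: "clinear_op R" "hermitian_op R" "positive_op R"
    and D: "D > 0" "\<And>z. norm (R z) \<le> D * norm z"
  shows "(norm (R x))\<^sup>2 \<le> D * Re (cinner x (R x))"
proof -
  define N where "N = (norm (R x))\<^sup>2"
  define P where "P = Re (cinner x (R x))"
  define Q where "Q = Re (cinner (R x) (R (R x)))"
  have "Q \<le> norm (R x) * norm (R (R x))"
    using complex_Re_le_cmod[of "cinner (R x) (R (R x))"] cinner_cauchy_schwarz[of "R x" "R (R x)"]
    by (simp add: Q_def)
  also have "\<dots> \<le> D * N"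
    using mult_left_mono[OF D(2)[of "R x"] norm_ge_zero[of "R x"]]
    by (simp add: N_def power2_eq_square algebra_simps)
  finally have QN: "Q \<le> D * N" .
  \<comment> \<open>positivity of the quadratic form at \<open>x - t R x\<close> with \<open>t = 1/D\<close>\<close>
  have "0 \<le> Re (cinner (x - (1 / D) *\<^sub>R R x) (R (x - (1 / D) *\<^sub>R R x)))"
    using R(3) by (simp add: positive_op_def)
  also have "\<dots> = P - 2 / D * N + Q / D\<^sup>2"
  proof -
    have "cinner x (R (R x)) = of_real N"
      using hermitian_opD[OF R(2), of x "R x"] by (simp add: N_def cinner_self_eq_norm_power2)
    then show ?thesis
      using D(1) by (simp add: clinear_op_simps[OF R(1)] cinner_simps P_def Q_def N_def
          cinner_self_eq_norm_power2[of "R x"] power2_eq_square field_simps)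
  qed
  also have "\<dots> \<le> P - N / D"
    using QN D(1) by (simp add: power2_eq_square field_simps)
  finally show ?thesis
    using D(1) by (simp add: P_def N_def field_simps)
qed

section \<open>Invertibility and the spectrum\<close>

lemma bij_scaleR: "c \<noteq> 0 \<Longrightarrow> bij (\<lambda>x::'a::real_vector. c *\<^sub>R x)"
  by (rule o_bij[where g = "\<lambda>x. inverse c *\<^sub>R x"]) (simp_all add: fun_eq_iff)

lemma surj_id_minus_contraction:
  fixes C :: "'a::{real_normed_vector, complete_space} \<Rightarrow> 'a"
  assumes "linear C" and q: "0 \<le> q" "q < 1" and bound: "\<And>x. norm (C x) \<le> q * norm x"
  shows "surj (\<lambda>x. x - C x)"
  unfolding surj_def
proof
  fix y
  have "\<forall>a b. dist (C a + y) (C b + y) \<le> q * dist a b"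
    using bound by (simp add: dist_norm flip: linear_diff[OF assms(1)])
  then obtain x where "C x + y = x"
    using banach_fix_type[OF q, of "\<lambda>x. C x + y"] by auto
  then show "\<exists>x. y = x - C x"
    by (metis add_diff_cancel_left')
qed

text \<open>For \<open>S \<ge> c > 0\<close> and \<open>\<parallel>S\<parallel> \<le> K\<close>, the operator \<open>I - S / (K + c)\<close> is a contraction.\<close>

lemma coercive_shift_quadratic_form_le:
  assumes "K \<ge> 0" and K: "\<And>x. norm (S x) \<le> K * norm x" and "c > 0"
    and coercive: "\<And>x. c * (norm x)\<^sup>2 \<le> Re (cinner x (S x))"
  shows "\<bar>Re (cinner x (x - (1 / (K + c)) *\<^sub>R S x))\<bar> \<le> (1 - c / (K + c)) * (norm x)\<^sup>2"
proof -
  have D: "K + c > 0"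
    using \<open>K \<ge> 0\<close> \<open>c > 0\<close> by simp
  have "Re (cinner x (S x)) \<le> norm x * norm (S x)"
    using complex_Re_le_cmod[of "cinner x (S x)"] cinner_cauchy_schwarz[of x "S x"] by linarith
  also have "\<dots> \<le> K * (norm x)\<^sup>2"
    using mult_left_mono[OF K[of x] norm_ge_zero[of x]] by (simp add: power2_eq_square mult_ac)
  also have "\<dots> \<le> (norm x)\<^sup>2 * (K + c)"
    using \<open>c > 0\<close> by (simp add: algebra_simps)
  finally have "Re (cinner x (S x)) / (K + c) \<le> (norm x)\<^sup>2"
    using D by (simp add: divide_le_eq)
  moreover have "c * (norm x)\<^sup>2 / (K + c) \<le> Re (cinner x (S x)) / (K + c)"
    using coercive[of x] D by (simp add: divide_right_mono)
  moreover have
    "Re (cinner x (x - (1 / (K + c)) *\<^sub>R S x)) = (norm x)\<^sup>2 - Re (cinner x (S x)) / (K + c)"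
    by (simp add: cinner_simps cinner_self_eq_norm_power2)
  moreover have "(1 - c / (K + c)) * (norm x)\<^sup>2 = (norm x)\<^sup>2 - c * (norm x)\<^sup>2 / (K + c)"
    by (simp add: left_diff_distrib)
  ultimately show ?thesis
    by linarith
qed

lemma coercive_hermitian_op_bij:
  fixes S :: "'a::chilbert_space \<Rightarrow> 'a"
  assumes S: "bounded_op S" "hermitian_op S"
    and c: "c > 0" and coercive: "\<And>x. c * (norm x)\<^sup>2 \<le> Re (cinner x (S x))"
  shows "bij S"
proof -
  obtain K where K: "K > 0" "\<And>x. norm (S x) \<le> K * norm x"
    using bounded_op_pos_bounded[OF S(1)] by blast
  define D where "D = K + c"
  define C where "C x = x - (1 / D) *\<^sub>R S x" for x
  have D: "D > 0" and q: "0 \<le> 1 - c / D" "1 - c / D < 1"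
    using c K by (auto simp: D_def field_simps)
  have C: "bounded_op C" "hermitian_op C"
    unfolding C_def using S
    by (simp_all add: bounded_op_diff bounded_op_id bounded_op_scaleR hermitian_op_def cinner_simps)
  have "linear C"
    using bounded_op_bounded_linear[OF C(1)] by (rule bounded_linear.linear)
  moreover have "norm (C x) \<le> (1 - c / D) * norm x" for x
    using coercive_shift_quadratic_form_le[OF less_imp_le[OF K(1)] K(2) c coercive]
    by (intro hermitian_op_norm_le[OF bounded_op_clinear_op[OF C(1)] C(2)]) (simp add: C_def D_def)
  ultimately have "surj (\<lambda>x. x - C x)"
    by (rule surj_id_minus_contraction[OF _ q])
  have "surj S"
    unfolding surj_def
  proof
    fix y
    obtain x where "(1 / D) *\<^sub>R y = x - C x"
      using \<open>surj (\<lambda>x. x - C x)\<close> by (metis surjD)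
    then show "\<exists>x. y = S x"
      using D by (auto simp: C_def)
  qed
  moreover have "inj S"
  proof (rule injI)
    fix a b
    assume "S a = S b"
    then have "c * (norm (a - b))\<^sup>2 \<le> 0"
      using coercive[of "a - b"] by (simp add: clinear_op_diff[OF bounded_op_clinear_op[OF S(1)]])
    then show "a = b"
      using c by (simp add: mult_le_0_iff)
  qed
  ultimately show ?thesis
    by (simp add: bij_def)
qed

lemma Baire_closed_cover_contains_ball:
  fixes F :: "nat \<Rightarrow> 'a::complete_space set"
  assumes closed: "\<And>k. closed (F k)" and cover: "\<Union>(range F) = UNIV"
  obtains k y0 r where "r > 0" "ball y0 r \<subseteq> F k"
proof -
  have "\<exists>k. interior (F k) \<noteq> {}"
  proof (rule ccontr)
    assume "\<not> ?thesis"
    then have "euclidean interior_of \<Union>(range F) = {}"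
      by (intro Baire_category_alt)
        (auto simp: completely_metrizable_space_euclidean closed simp flip: closed_closedin)
    then show False
      using cover by simp
  qed
  then obtain k y0 where "y0 \<in> interior (F k)"
    by blast
  then show thesis
    by (meson that interior_subset open_contains_ball open_interior subset_trans)
qed

lemma norm_le_of_cinner_ball_bound:
  assumes "r > 0" and bound: "\<And>z. norm z < r \<Longrightarrow> cmod (cinner v z) \<le> K"
  shows "norm v \<le> 2 * K / r"
proof (cases "v = 0")
  case False
  define z where "z = (r / 2 / norm v) *\<^sub>R v"
  have "norm z < r"
    using False \<open>r > 0\<close> by (simp add: z_def)
  moreover have "cinner v z = of_real (r / 2 * norm v)"
    using False by (simp add: z_def cinner_scaleR_right cinner_self_eq_norm_power2 power2_eq_square)
  ultimately have "r / 2 * norm v \<le> K"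
    using bound by (metis norm_of_real abs_le_iff)
  then show ?thesis
    using \<open>r > 0\<close> by (simp add: field_simps)
next
  case True
  have "0 \<le> K"
    using bound[of 0] \<open>r > 0\<close> by simp
  then show ?thesis
    using True \<open>r > 0\<close> by simp
qed

text \<open>The uniform boundedness principle, via Baire.\<close>

lemma weakly_bounded_imp_bounded:
  fixes V :: "'a::chilbert_space set"
  assumes weak: "\<And>y. \<exists>K. \<forall>v\<in>V. cmod (cinner v y) \<le> K"
  shows "bounded V"
proof -
  define F where "F k = (\<Inter>v\<in>V. {y. cmod (cinner v y) \<le> real k})" for k :: nat
  have F_closed: "closed (F k)" for k
    unfolding F_def
    by (intro closed_INT ballI closed_Collect_le continuous_on_norm continuous_on_const
        linear_continuous_on[OF bounded_linear_cinner_right])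
  have "y \<in> \<Union>(range F)" for y
  proof -
    obtain K where K: "\<forall>v\<in>V. cmod (cinner v y) \<le> K"
      using weak by blast
    have "cmod (cinner v y) \<le> real (nat \<lceil>K\<rceil>)" if "v \<in> V" for v
      using order_trans[OF K[rule_format, OF that] real_nat_ceiling_ge] .
    then have "y \<in> F (nat \<lceil>K\<rceil>)"
      by (simp add: F_def)
    then show ?thesis
      by (rule UN_I[OF UNIV_I])
  qed
  then have "\<Union>(range F) = UNIV"
    by blast
  then obtain k y0 r where r: "r > 0" "ball y0 r \<subseteq> F k"
    by (rule Baire_closed_cover_contains_ball[OF F_closed])
  have small: "cmod (cinner v z) \<le> 2 * real k" if "v \<in> V" "norm z < r" for v z
  proof -
    have "y0 + z \<in> F k" "y0 \<in> F k"
      using r that(2) by (auto simp: dist_norm)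
    then have "cmod (cinner v (y0 + z)) \<le> real k" "cmod (cinner v y0) \<le> real k"
      using that(1) by (auto simp: F_def)
    moreover have "cinner v z = cinner v (y0 + z) - cinner v y0"
      by (simp add: cinner_add_right)
    then have "cmod (cinner v z) \<le> cmod (cinner v (y0 + z)) + cmod (cinner v y0)"
      by (metis norm_triangle_ineq4)
    ultimately show ?thesis
      by linarith
  qed
  then have "norm v \<le> 2 * (2 * real k) / r" if "v \<in> V" for v
    using that r(1) by (intro norm_le_of_cinner_ball_bound) auto
  then show ?thesis
    unfolding bounded_iff by blast
qed

lemma hermitian_op_inv:
  assumes "hermitian_op S" "bij S"
  shows "hermitian_op (inv S)"
  unfolding hermitian_op_def
proof (intro allI)
  fix x y
  have "S (inv S z) = z" for z
    using \<open>bij S\<close> by (simp add: bij_is_surj surj_f_inv_f)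
  then show "cinner (inv S x) y = cinner x (inv S y)"
    using hermitian_opD[OF assms(1), of "inv S x" "inv S y"] by simp
qed

lemma bij_hermitian_op_bounded_below:
  fixes S :: "'a::chilbert_space \<Rightarrow> 'a"
  assumes S: "bounded_op S" "hermitian_op S" and "bij S"
  obtains C where "C > 0" "\<And>x. norm x \<le> C * norm (S x)"
proof -
  have S_lin: "clinear_op S"
    using S(1) by (rule bounded_op_clinear_op)
  define G where "G = inv S"
  have GS: "G (S x) = x" for x
    using \<open>bij S\<close> by (simp add: G_def bij_is_inj)
  have G_herm: "cinner (G x) y = cinner x (G y)" for x y
    using hermitian_op_inv[OF S(2) \<open>bij S\<close>] by (simp add: G_def hermitian_op_def)
  have "\<exists>K. \<forall>v\<in>G ` {x. norm x \<le> 1}. cmod (cinner v y) \<le> K" for y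
  proof (intro exI ballI)
    fix v
    assume "v \<in> G ` {x. norm x \<le> 1}"
    then obtain x where "norm x \<le> 1" "v = G x"
      by blast
    have "cmod (cinner v y) \<le> norm x * norm (G y)"
      using cinner_cauchy_schwarz[of x "G y"] by (simp add: \<open>v = G x\<close> G_herm)
    also have "\<dots> \<le> norm (G y)"
      using \<open>norm x \<le> 1\<close> mult_right_mono[of "norm x" 1 "norm (G y)"] by simp
    finally show "cmod (cinner v y) \<le> norm (G y)" .
  qed
  then have "bounded (G ` {x. norm x \<le> 1})"
    by (rule weakly_bounded_imp_bounded)
  then obtain C where C: "\<And>x. norm x \<le> 1 \<Longrightarrow> norm (G x) \<le> C"
    unfolding bounded_iff by blast
  have "norm x \<le> (max C 0 + 1) * norm (S x)" for x
  proof (cases "S x = 0")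
    case False
    have "G ((1 / norm (S x)) *\<^sub>R S x) = (1 / norm (S x)) *\<^sub>R x"
      using GS[of "(1 / norm (S x)) *\<^sub>R x"] by (simp add: clinear_op_scaleR[OF S_lin])
    then have "norm x / norm (S x) \<le> C"
      using C[of "(1 / norm (S x)) *\<^sub>R S x"] False by simp
    then have "norm x \<le> C * norm (S x)"
      using False by (simp add: field_simps)
    also have "\<dots> \<le> (max C 0 + 1) * norm (S x)"
      by (intro mult_right_mono) auto
    finally show ?thesis .
  next
    case True
    then show ?thesis
      using GS[of x] GS[of 0] by (simp add: clinear_op_zero[OF S_lin])
  qed
  then show thesis
    by (rule that[rotated]) simp
qed

lemma positive_op_not_bij:
  fixes S :: "'a::chilbert_space \<Rightarrow> 'a"
  assumes S: "bounded_op S" "hermitian_op S" "positive_op S"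
    and small: "\<And>e. e > 0 \<Longrightarrow> \<exists>x. norm x = 1 \<and> Re (cinner x (S x)) < e"
  shows "\<not> bij S"
proof
  assume "bij S"
  obtain C where C: "C > 0" "\<And>x. norm x \<le> C * norm (S x)"
    using bij_hermitian_op_bounded_below[OF S(1,2) \<open>bij S\<close>] by blast
  obtain K where K: "K > 0" "\<And>x. norm (S x) \<le> K * norm x"
    using bounded_op_pos_bounded[OF S(1)] by blast
  obtain x where x: "norm x = 1" "Re (cinner x (S x)) < 1 / (C * C * K)"
    using small[of "1 / (C * C * K)"] C K by auto
  have "(norm (S x))\<^sup>2 \<le> K * Re (cinner x (S x))"
    by (rule positive_op_norm_power2_le[OF bounded_op_clinear_op[OF S(1)] S(2,3) K])
  also have "\<dots> < 1 / (C * C)"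
    using x K mult_strict_left_mono[OF x(2) K(1)] by simp
  finally have "(C * norm (S x))\<^sup>2 < 1"
    using C by (simp add: field_simps power2_eq_square)
  moreover have "1 \<le> C * norm (S x)"
    using C(2)[of x] x by simp
  then have "1 \<le> (C * norm (S x))\<^sup>2"
    by (rule one_le_power)
  ultimately show False
    by simp
qed

lemma in_op_spectrum_numerical_range_inf:
  fixes T :: "'a::chilbert_space \<Rightarrow> 'a"
  assumes T: "bounded_op T" "hermitian_op T"
    and lower: "\<And>x. c * (norm x)\<^sup>2 \<le> Re (cinner x (T x))"
    and approx: "\<And>e. e > 0 \<Longrightarrow> \<exists>x. norm x = 1 \<and> Re (cinner x (T x)) < c + e"
  shows "c \<in> op_spectrum T"
proof -
  define R where "R x = T x - c *\<^sub>R x" for x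
  have quad: "Re (cinner x (R x)) = Re (cinner x (T x)) - c * (norm x)\<^sup>2" for x
    by (simp add: R_def cinner_simps cinner_self_eq_norm_power2)
  have R: "bounded_op R" "hermitian_op R"
    unfolding R_def using T by (simp_all add: bounded_op_shift hermitian_op_shift)
  moreover have "positive_op R"
    using hermitian_op_quadratic_form_real[OF R(2)] quad lower by (simp add: positive_op_def)
  moreover have "\<exists>x. norm x = 1 \<and> Re (cinner x (R x)) < e" if "e > 0" for e
  proof -
    obtain x where "norm x = 1" "Re (cinner x (T x)) < c + e"
      using approx[OF \<open>e > 0\<close>] by blast
    then show ?thesis
      using quad[of x] by auto
  qed
  ultimately have "\<not> bij R"
    by (rule positive_op_not_bij)
  then show ?thesis
    by (simp add: op_spectrum_def R_def[abs_def])
qed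

lemma op_spectrum_lower_bound:
  fixes T :: "'a::chilbert_space \<Rightarrow> 'a"
  assumes T: "bounded_op T" "hermitian_op T" and "(x0::'a) \<noteq> 0"
  obtains c where "c \<in> op_spectrum T" "\<And>x. c * (norm x)\<^sup>2 \<le> Re (cinner x (T x))"
proof -
  have T_lin: "clinear_op T"
    using T(1) by (rule bounded_op_clinear_op)
  obtain K where K: "K > 0" "\<And>x. norm (T x) \<le> K * norm x"
    using bounded_op_pos_bounded[OF T(1)] by blast
  define V where "V = {Re (cinner x (T x)) | x. norm x = 1}"
  have "norm ((1 / norm x0) *\<^sub>R x0) = 1"
    using \<open>x0 \<noteq> 0\<close> by simp
  then have V_ne: "V \<noteq> {}"
    unfolding V_def by blast
  have "- K \<le> v" if "v \<in> V" for v
  proof -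
    obtain x where x: "norm x = 1" "v = Re (cinner x (T x))"
      using \<open>v \<in> V\<close> by (auto simp: V_def)
    have "- v \<le> norm x * norm (T x)"
      using x(2) abs_Re_le_cmod[of "cinner x (T x)"] cinner_cauchy_schwarz[of x "T x"] by linarith
    then show ?thesis
      using K(2)[of x] x(1) by simp
  qed
  then have bdd: "bdd_below V"
    by (auto simp: bdd_below_def)
  have "Inf V * (norm x)\<^sup>2 \<le> Re (cinner x (T x))" for x
  proof (cases "x = 0")
    case False
    define u where "u = (1 / norm x) *\<^sub>R x"
    have "Inf V \<le> Re (cinner u (T u))"
      using False bdd by (intro cInf_lower) (auto simp: V_def u_def)
    also have "\<dots> = Re (cinner x (T x)) / (norm x)\<^sup>2"
      by (simp add: u_def clinear_op_scaleR[OF T_lin] cinner_simps power2_eq_square)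
    finally show ?thesis
      using False by (simp add: field_simps)
  qed (simp add: clinear_op_zero[OF T_lin])
  moreover have "\<exists>x. norm x = 1 \<and> Re (cinner x (T x)) < Inf V + e" if "e > 0" for e
    using cInf_lessD[OF V_ne, of "Inf V + e"] that by (auto simp: V_def)
  ultimately show thesis
    using that in_op_spectrum_numerical_range_inf[OF T] by blast
qed

lemma op_spectrum_subset_of_op_le:
  fixes T :: "'a::chilbert_space \<Rightarrow> 'a"
  assumes T: "bounded_op T" and lower: "op_le (scal_op m) T" and upper: "op_le T (scal_op M)"
  shows "op_spectrum T \<subseteq> {m..M}"
proof
  fix t
  assume t: "t \<in> op_spectrum T"
  have T_herm: "hermitian_op T"
    by (rule hermitian_op_of_op_le_scal_op[OF T lower])
  have "\<not> t < m"
  proof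
    assume "t < m"
    have "bij (\<lambda>x. T x - t *\<^sub>R x)"
    proof (rule coercive_hermitian_op_bij)
      show "(m - t) * (norm x)\<^sup>2 \<le> Re (cinner x (T x - t *\<^sub>R x))" for x
        using lower by (simp add: op_le_def scal_op_def cinner_simps cinner_self_eq_norm_power2
            algebra_simps)
    qed (use T T_herm \<open>t < m\<close> in \<open>simp_all add: bounded_op_shift hermitian_op_shift\<close>)
    then show False
      using t by (simp add: op_spectrum_def)
  qed
  moreover have "\<not> t > M"
  proof
    assume "t > M"
    have "bij (\<lambda>x. - (T x - t *\<^sub>R x))"
    proof (rule coercive_hermitian_op_bij)
      show "(t - M) * (norm x)\<^sup>2 \<le> Re (cinner x (- (T x - t *\<^sub>R x)))" for x
        using upper by (simp add: op_le_def scal_op_def cinner_simps cinner_self_eq_norm_power2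
            algebra_simps)
      show "bounded_op (\<lambda>x. - (T x - t *\<^sub>R x))"
        using bounded_op_scaleR[OF bounded_op_shift[OF T], of "- 1" t] by simp
      show "hermitian_op (\<lambda>x. - (T x - t *\<^sub>R x))"
        using hermitian_op_uminus[OF hermitian_op_shift[OF T_herm]] .
    qed (use \<open>t > M\<close> in simp)
    then have "bij (uminus \<circ> (\<lambda>x. - (T x - t *\<^sub>R x)))"
      by (intro bij_comp) (auto simp: bij_uminus)
    then show False
      using t by (simp add: op_spectrum_def o_def)
  qed
  ultimately show "t \<in> {m..M}"
    by simp
qed

section \<open>Polynomials of an operator\<close>

definition cpoly :: "real poly \<Rightarrow> complex \<Rightarrow> complex" where
  "cpoly p z = (\<Sum>i\<le>degree p. of_real (coeff p i) * z ^ i)"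

lemma cpoly_eq_sum:
  assumes "degree p \<le> N"
  shows "cpoly p z = (\<Sum>i\<le>N. of_real (coeff p i) * z ^ i)"
  unfolding cpoly_def
  by (rule sum.mono_neutral_left) (use assms in \<open>auto simp: coeff_eq_0\<close>)

lemma cpoly_0 [simp]: "cpoly 0 z = 0"
  by (simp add: cpoly_def)

lemma cpoly_add: "cpoly (p + q) z = cpoly p z + cpoly q z"
  using cpoly_eq_sum[of "p + q" "max (degree p) (degree q)" z]
    cpoly_eq_sum[of p "max (degree p) (degree q)" z]
    cpoly_eq_sum[of q "max (degree p) (degree q)" z]
  by (simp add: degree_add_le_max distrib_right sum.distrib)

lemma cpoly_smult: "cpoly (smult c p) z = of_real c * cpoly p z"
  using cpoly_eq_sum[of "smult c p" "degree p" z]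
  by (simp add: cpoly_def sum_distrib_left mult.assoc)

lemma cpoly_pCons: "cpoly (pCons a p) z = of_real a + z * cpoly p z"
proof -
  have "cpoly (pCons a p) z = (\<Sum>i\<le>Suc (degree p). of_real (coeff (pCons a p) i) * z ^ i)"
    by (rule cpoly_eq_sum) (simp add: degree_pCons_le)
  also have "\<dots> = of_real a + z * cpoly p z"
    by (subst sum.atMost_Suc_shift) (simp add: cpoly_def sum_distrib_left algebra_simps)
  finally show ?thesis .
qed

lemma cpoly_mult: "cpoly (p * q) z = cpoly p z * cpoly q z"
  by (induction p rule: pCons_induct)
    (simp_all add: cpoly_add cpoly_smult cpoly_pCons algebra_simps)

lemma cpoly_of_real: "cpoly p (of_real r) = of_real (poly p r)"
  by (simp add: cpoly_def poly_altdef)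

lemma cpoly_root_exists:
  assumes "degree p > 0"
  obtains z where "cpoly p z = 0"
proof -
  have "cpoly p = poly (map_poly complex_of_real p)"
    by (simp add: fun_eq_iff poly_altdef cpoly_def degree_map_poly coeff_map_poly)
  moreover have "\<not> constant (poly (map_poly complex_of_real p))"
    using assms by (simp add: constant_degree degree_map_poly)
  ultimately show thesis
    using fundamental_theorem_of_algebra that by metis
qed

lemma quadratic_dvd_of_cpoly_root:
  fixes q :: "real poly"
  assumes "b \<noteq> 0" and root: "cpoly q (Complex a b) = 0"
  shows "[:a\<^sup>2 + b\<^sup>2, - 2 * a, 1:] dvd q"
proof -
  define Q where "Q = [:a\<^sup>2 + b\<^sup>2, - 2 * a, 1:]"
  define r where "r = q mod Q"
  have "cpoly Q (Complex a b) = 0"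
    by (simp add: Q_def cpoly_pCons complex_eq_iff power2_eq_square algebra_simps)
  then have "cpoly r (Complex a b) = 0"
    using root cpoly_add[of "Q * (q div Q)" r] cpoly_mult[of Q "q div Q"] by (simp add: r_def)
  moreover have "degree r \<le> 1"
    using degree_mod_less[of Q q] by (auto simp: r_def Q_def)
  then have "r = [:coeff r 0, coeff r 1:]"
    by (intro poly_eqI) (auto simp: coeff_pCons coeff_eq_0 split: nat.splits)
  ultimately have "of_real (coeff r 0) + Complex a b * of_real (coeff r 1) = 0"
    by (metis cpoly_pCons cpoly_0 mult_zero_right add_0_right)
  then have "coeff r 1 = 0" "coeff r 0 = 0"
    using \<open>b \<noteq> 0\<close> by (auto simp: complex_eq_iff)
  then have "r = 0"
    using \<open>r = [:coeff r 0, coeff r 1:]\<close> by simp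
  then show ?thesis
    by (simp add: r_def Q_def mod_eq_0_iff_dvd)
qed

lemma real_poly_linear_or_quadratic_factor:
  fixes q :: "real poly"
  assumes "degree q > 0"
  obtains (linear) r d where "poly q r = 0" "q = [:- r, 1:] * d"
    | (quadratic) a b d where "b \<noteq> 0" "q = [:a\<^sup>2 + b\<^sup>2, - 2 * a, 1:] * d"
proof -
  obtain z where z: "cpoly q z = 0"
    using cpoly_root_exists[OF assms] by blast
  show thesis
  proof (cases "Im z = 0")
    case True
    then have "z = of_real (Re z)"
      by (simp add: complex_eq_iff)
    then have "poly q (Re z) = 0"
      using z cpoly_of_real[of q "Re z"] by simp
    then show thesis
      using linear by (metis dvdE poly_eq_0_iff_dvd)
  next
    case False
    have "[:(Re z)\<^sup>2 + (Im z)\<^sup>2, - 2 * Re z, 1:] dvd q"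
      using quadratic_dvd_of_cpoly_root[OF False] z by simp
    then obtain d where "q = [:(Re z)\<^sup>2 + (Im z)\<^sup>2, - 2 * Re z, 1:] * d"
      by (rule dvdE)
    then show thesis
      by (rule quadratic[OF False])
  qed
qed

lemma poly_op_eq_sum:
  assumes "degree p \<le> N"
  shows "poly_op p T x = (\<Sum>i\<le>N. coeff p i *\<^sub>R (T ^^ i) x)"
  unfolding poly_op_def
  by (rule sum.mono_neutral_left) (use assms in \<open>auto simp: coeff_eq_0\<close>)

lemma poly_op_0 [simp]: "poly_op 0 T x = 0"
  by (simp add: poly_op_def)

lemma poly_op_const [simp]: "poly_op [:c:] T x = c *\<^sub>R x"
  by (simp add: poly_op_def)

lemma poly_op_pCons:
  assumes "clinear_op T"
  shows "poly_op (pCons a p) T x = a *\<^sub>R x + T (poly_op p T x)"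
proof -
  have "poly_op (pCons a p) T x = (\<Sum>i\<le>Suc (degree p). coeff (pCons a p) i *\<^sub>R (T ^^ i) x)"
    by (rule poly_op_eq_sum) (simp add: degree_pCons_le)
  also have "\<dots> = a *\<^sub>R x + T (poly_op p T x)"
    by (subst sum.atMost_Suc_shift)
      (simp add: poly_op_def clinear_op_sum[OF assms] clinear_op_scaleR[OF assms])
  finally show ?thesis .
qed

lemma poly_op_add: "poly_op (p + q) T x = poly_op p T x + poly_op q T x"
  using poly_op_eq_sum[of "p + q" "max (degree p) (degree q)" T x]
    poly_op_eq_sum[of p "max (degree p) (degree q)" T x]
    poly_op_eq_sum[of q "max (degree p) (degree q)" T x]
  by (simp add: degree_add_le_max scaleR_add_left sum.distrib)

lemma poly_op_smult: "poly_op (smult c p) T x = c *\<^sub>R poly_op p T x"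
  using poly_op_eq_sum[of "smult c p" "degree p" T x] by (simp add: poly_op_def scaleR_sum_right)

lemma poly_op_diff: "poly_op (p - q) T x = poly_op p T x - poly_op q T x"
proof -
  have "p - q = p + smult (- 1) q"
    by simp
  then show ?thesis
    by (simp only: poly_op_add poly_op_smult) simp
qed

lemma poly_op_linear: "clinear_op T \<Longrightarrow> poly_op [:b, a:] T x = a *\<^sub>R T x + b *\<^sub>R x"
  by (simp add: poly_op_pCons clinear_op_scaleR)

lemma poly_op_mult:
  assumes "clinear_op T"
  shows "poly_op (p * q) T x = poly_op p T (poly_op q T x)"
  by (induction p arbitrary: x rule: pCons_induct)
    (simp_all add: poly_op_add poly_op_smult poly_op_pCons[OF assms])

lemma poly_op_commute:
  assumes "clinear_op T"
  shows "poly_op p T (T x) = T (poly_op p T x)"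
  using poly_op_mult[OF assms, of p "[:0, 1:]" x] poly_op_mult[OF assms, of "[:0, 1:]" p x]
  by (simp add: poly_op_linear[OF assms] mult.commute)

lemma bounded_op_poly_op:
  assumes T: "bounded_op T"
  shows "bounded_op (poly_op p T)"
proof (induction p rule: pCons_induct)
  case 0
  then show ?case
    using bounded_op_zero by (simp add: fun_eq_iff)
next
  case (pCons a p)
  then show ?case
    unfolding poly_op_pCons[OF bounded_op_clinear_op[OF T]]
    by (intro bounded_op_add bounded_op_scaleR bounded_op_id bounded_op_compose[OF T])
qed

lemma hermitian_op_poly_op:
  assumes T: "clinear_op T" "hermitian_op T"
  shows "hermitian_op (poly_op p T)"
proof (induction p rule: pCons_induct)
  case 0
  then show ?case
    by (simp add: hermitian_op_def)
next
  case (pCons a p)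
  have "cinner (T (poly_op p T x)) y = cinner x (T (poly_op p T y))" for x y
  proof -
    have "cinner (T (poly_op p T x)) y = cinner (poly_op p T x) (T y)"
      by (rule hermitian_opD[OF T(2)])
    also have "\<dots> = cinner x (poly_op p T (T y))"
      using pCons.IH by (simp add: hermitian_op_def)
    also have "\<dots> = cinner x (T (poly_op p T y))"
      by (simp add: poly_op_commute[OF T(1)])
    finally show ?thesis .
  qed
  then show ?case
    by (simp add: hermitian_op_def poly_op_pCons[OF T(1)] cinner_simps)
qed

section \<open>Spectral mapping and positivity for polynomials\<close>

lemma poly_op_linear_factor_bij:
  assumes "clinear_op T" "r \<notin> op_spectrum T"
  shows "bij (poly_op [:- r, 1:] T)"
proof -
  have "poly_op [:- r, 1:] T = (\<lambda>x. T x - r *\<^sub>R x)"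
    by (simp add: fun_eq_iff poly_op_linear[OF assms(1)])
  then show ?thesis
    using assms(2) by (simp add: op_spectrum_def)
qed

lemma poly_op_quadratic_factor_bij:
  fixes T :: "'a::chilbert_space \<Rightarrow> 'a"
  assumes T: "bounded_op T" "hermitian_op T" and "b \<noteq> 0"
  shows "bij (poly_op [:a\<^sup>2 + b\<^sup>2, - 2 * a, 1:] T)"
proof (rule coercive_hermitian_op_bij)
  have T_lin: "clinear_op T"
    using T(1) by (rule bounded_op_clinear_op)
  show "bounded_op (poly_op [:a\<^sup>2 + b\<^sup>2, - 2 * a, 1:] T)"
    by (rule bounded_op_poly_op[OF T(1)])
  show "hermitian_op (poly_op [:a\<^sup>2 + b\<^sup>2, - 2 * a, 1:] T)"
    by (rule hermitian_op_poly_op[OF T_lin T(2)])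
  show "b\<^sup>2 > 0"
    using \<open>b \<noteq> 0\<close> by simp
  \<comment> \<open>the quadratic form is \<open>\<parallel>(T - a) x\<parallel>\<^sup>2 + b\<^sup>2 \<parallel>x\<parallel>\<^sup>2\<close>\<close>
  fix x
  have "cinner x (poly_op [:a\<^sup>2 + b\<^sup>2, - 2 * a, 1:] T x) =
      cinner (T x - a *\<^sub>R x) (T x - a *\<^sub>R x) + of_real (b\<^sup>2) * cinner x x"
    using hermitian_opD[OF T(2), of x "T x"] hermitian_opD[OF T(2), of x x]
    by (simp add: poly_op_pCons[OF T_lin] clinear_op_simps[OF T_lin] cinner_simps algebra_simps
        power2_eq_square)
  then show "b\<^sup>2 * (norm x)\<^sup>2 \<le> Re (cinner x (poly_op [:a\<^sup>2 + b\<^sup>2, - 2 * a, 1:] T x))"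
    by (simp add: cinner_self_eq_norm_power2)
qed

text \<open>Induction on the degree: split off a linear factor at a real root, which lies off the
  spectrum, or a coercive quadratic factor at a non-real root.\<close>

lemma poly_op_bij:
  fixes T :: "'a::chilbert_space \<Rightarrow> 'a"
  assumes T: "bounded_op T" "hermitian_op T"
  shows "q \<noteq> 0 \<Longrightarrow> (\<forall>t\<in>op_spectrum T. poly q t \<noteq> 0) \<Longrightarrow> bij (poly_op q T)"
proof (induction "degree q" arbitrary: q rule: less_induct)
  case less
  have T_lin: "clinear_op T"
    using T(1) by (rule bounded_op_clinear_op)
  have factor: "bij (poly_op q T)"
    if "q = F * d" "bij (poly_op F T)" "degree F > 0" for F d
  proof -
    have "d \<noteq> 0" "F \<noteq> 0"
      using less.prems that by auto
    then have "degree d < degree q"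
      using that by (simp add: degree_mult_eq)
    moreover have "\<forall>t\<in>op_spectrum T. poly d t \<noteq> 0"
      using less.prems that by auto
    ultimately have "bij (poly_op d T)"
      using less.hyps \<open>d \<noteq> 0\<close> by blast
    moreover have "poly_op q T = poly_op F T \<circ> poly_op d T"
      by (simp add: fun_eq_iff that poly_op_mult[OF T_lin])
    ultimately show ?thesis
      using bij_comp[OF _ that(2)] by simp
  qed
  show ?case
  proof (cases "degree q = 0")
    case True
    then obtain c where "q = [:c:]"
      by (rule degree_eq_zeroE)
    then have "poly_op q T = (\<lambda>x. c *\<^sub>R x)" "c \<noteq> 0"
      using less.prems by (auto simp: fun_eq_iff)
    then show ?thesis
      using bij_scaleR by simp
  next
    case False
    then have "degree q > 0"
      by simp
    then show ?thesis
    proof (cases rule: real_poly_linear_or_quadratic_factor)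
      case (linear r d)
      then have "r \<notin> op_spectrum T"
        using less.prems by auto
      then show ?thesis
        using factor[OF linear(2) poly_op_linear_factor_bij[OF T_lin]] by simp
    next
      case (quadratic a b d)
      then show ?thesis
        using factor[OF quadratic(2) poly_op_quadratic_factor_bij[OF T quadratic(1)]] by simp
    qed
  qed
qed

lemma positive_op_poly_op:
  fixes T :: "'a::chilbert_space \<Rightarrow> 'a"
  assumes T: "bounded_op T" "hermitian_op T" and p: "\<And>t. t \<in> op_spectrum T \<Longrightarrow> 0 \<le> poly p t"
  shows "positive_op (poly_op p T)"
proof -
  define S where "S = poly_op p T"
  have S: "bounded_op S" "hermitian_op S"
    unfolding S_def using T
    by (simp_all add: bounded_op_poly_op hermitian_op_poly_op bounded_op_clinear_op)
  \<comment> \<open>a negative bottom \<open>c\<close> of the spectrum of \<open>p(T)\<close> would be a value of \<open>p\<close> on the spectrum of \<open>T\<close>\<close>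
  have "0 \<le> Re (cinner x (S x))" for x
  proof (rule ccontr)
    assume neg: "\<not> 0 \<le> Re (cinner x (S x))"
    then have "x \<noteq> 0"
      by auto
    then obtain c where c: "c \<in> op_spectrum S" "\<And>y. c * (norm y)\<^sup>2 \<le> Re (cinner y (S y))"
      using op_spectrum_lower_bound[OF S] by blast
    have "c * (norm x)\<^sup>2 < 0"
      using c(2)[of x] neg by simp
    then have "c < 0"
      using \<open>x \<noteq> 0\<close> by (simp add: mult_less_0_iff)
    have "poly_op (p - [:c:]) T = (\<lambda>x. S x - c *\<^sub>R x)"
      by (simp add: fun_eq_iff S_def poly_op_diff)
    then have not_bij: "\<not> bij (poly_op (p - [:c:]) T)"
      using c(1) by (simp add: op_spectrum_def)
    have "\<exists>t\<in>op_spectrum T. poly p t = c"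
    proof (cases "p - [:c:] = 0")
      case True
      obtain t where "t \<in> op_spectrum T"
        using op_spectrum_lower_bound[OF T \<open>x \<noteq> 0\<close>] by blast
      then show ?thesis
        using True by auto
    next
      case False
      then show ?thesis
        using poly_op_bij[OF T False] not_bij by auto
    qed
    then show False
      using p \<open>c < 0\<close> by force
  qed
  then show ?thesis
    using hermitian_op_quadratic_form_real[OF S(2)] by (simp add: positive_op_def S_def)
qed

lemma poly_op_norm_le:
  fixes T :: "'a::chilbert_space \<Rightarrow> 'a"
  assumes T: "bounded_op T" "hermitian_op T" and p: "\<And>t. t \<in> op_spectrum T \<Longrightarrow> \<bar>poly p t\<bar> \<le> s"
  shows "norm (poly_op p T x) \<le> s * norm x"
proof (rule hermitian_op_norm_le)
  show "clinear_op (poly_op p T)" "hermitian_op (poly_op p T)"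
    using T by (simp_all add: bounded_op_clinear_op bounded_op_poly_op hermitian_op_poly_op)
  have "positive_op (poly_op ([:s:] - p) T)" "positive_op (poly_op ([:s:] + p) T)"
    by (rule positive_op_poly_op[OF T], use p in \<open>force simp: abs_le_iff\<close>)+
  then have pos: "0 \<le> Re (cinner y (poly_op ([:s:] - p) T y))"
      "0 \<le> Re (cinner y (poly_op ([:s:] + p) T y))" for y
    by (simp_all add: positive_op_def)
  show "\<bar>Re (cinner y (poly_op p T y))\<bar> \<le> s * (norm y)\<^sup>2" for y
    using pos[of y]
    by (simp add: poly_op_diff poly_op_add cinner_simps cinner_self_eq_norm_power2 abs_le_iff)
qed

section \<open>The continuous functional calculus\<close>

definition poly_approximates :: "(nat \<Rightarrow> real poly) \<Rightarrow> (real \<Rightarrow> real) \<Rightarrow> real set \<Rightarrow> bool" where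
  "poly_approximates P g S \<longleftrightarrow> (\<forall>e>0. \<exists>N. \<forall>n\<ge>N. \<forall>t\<in>S. \<bar>poly (P n) t - g t\<bar> < e)"

definition is_cfc :: "('a::complex_inner \<Rightarrow> 'a) \<Rightarrow> (real \<Rightarrow> real) \<Rightarrow> ('a \<Rightarrow> 'a) \<Rightarrow> bool" where
  "is_cfc T g B \<longleftrightarrow> bounded_op B \<and>
     (\<forall>P. poly_approximates P g (op_spectrum T) \<longrightarrow> (\<lambda>n. onorm (\<lambda>x. poly_op (P n) T x - B x)) \<longlonglongrightarrow> 0)"

lemma cfc_eq_The: "cfc T g = (THE B. is_cfc T g B)"
  by (simp add: cfc_def is_cfc_def poly_approximates_def)

lemma poly_approximates_subset:
  "poly_approximates P g S' \<Longrightarrow> S \<subseteq> S' \<Longrightarrow> poly_approximates P g S"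
  unfolding poly_approximates_def by (meson subsetD)

lemma poly_approximatesI_rate:
  assumes "c \<ge> 0" and rate: "\<And>n t. t \<in> S \<Longrightarrow> \<bar>poly (P n) t - g t\<bar> \<le> c / Suc n"
  shows "poly_approximates P g S"
  unfolding poly_approximates_def
proof (intro allI impI)
  fix e :: real
  assume "e > 0"
  obtain N :: nat where N: "c / e < N"
    using reals_Archimedean2 by blast
  have "\<bar>poly (P n) t - g t\<bar> < e" if "N \<le> n" "t \<in> S" for n t
  proof -
    have "c / e < Suc n"
      using N that(1) by linarith
    then have "c / Suc n < e"
      using \<open>e > 0\<close> by (simp add: field_simps)
    then show ?thesis
      using rate[OF that(2), of n] by linarith
  qed
  then show "\<exists>N. \<forall>n\<ge>N. \<forall>t\<in>S. \<bar>poly (P n) t - g t\<bar> < e"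
    by blast
qed

lemma real_polynomial_function_imp_poly:
  assumes "real_polynomial_function g"
  obtains p where "\<And>x. g x = poly p x"
proof -
  have "\<exists>p. \<forall>x. g x = poly p x"
    using assms
  proof (induction g rule: real_polynomial_function.induct)
    case (linear f)
    have "f x = poly [:0, f 1:] x" for x
      using linear_simps(5)[OF linear.hyps, of x 1] by simp
    then show ?case
      by blast
  next
    case (const c)
    then show ?case
      by (metis poly_const_conv)
  next
    case (add f g)
    then show ?case
      by (metis poly_add)
  next
    case (mult f g)
    then show ?case
      by (metis poly_mult)
  qed
  then show thesis
    using that by blast
qed

lemma poly_approximation_rate:
  fixes g :: "real \<Rightarrow> real"
  assumes "continuous_on {m..M} g"
  obtains Q where "\<And>n t. t \<in> {m..M} \<Longrightarrow> \<bar>poly (Q n) t - g t\<bar> \<le> 1 / Suc n"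
proof -
  have "\<exists>p. \<forall>t\<in>{m..M}. \<bar>poly p t - g t\<bar> \<le> 1 / Suc n" for n
  proof -
    obtain h where "real_polynomial_function h" "\<And>t. t \<in> {m..M} \<Longrightarrow> \<bar>g t - h t\<bar> < 1 / Suc n"
      using Stone_Weierstrass_real_polynomial_function[OF compact_Icc assms, of "1 / Suc n"] by auto
    moreover obtain p where "\<And>t. h t = poly p t"
      using real_polynomial_function_imp_poly[OF \<open>real_polynomial_function h\<close>] by blast
    ultimately show ?thesis
      by (metis abs_minus_commute less_imp_le)
  qed
  then show thesis
    using that by metis
qed

lemma onorm_tendsto_imp_tendsto:
  assumes "\<And>n. bounded_op (F n)" "bounded_op B"
    and "(\<lambda>n. onorm (\<lambda>x. F n x - B x)) \<longlonglongrightarrow> 0"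
  shows "(\<lambda>n. F n x) \<longlonglongrightarrow> B x"
proof -
  have "(\<lambda>n. F n x - B x) \<longlonglongrightarrow> 0"
  proof (rule Lim_null_comparison)
    show "\<forall>\<^sub>F n in sequentially. norm (F n x - B x) \<le> onorm (\<lambda>x. F n x - B x) * norm x"
      using assms(1,2)
      by (intro always_eventually allI onorm bounded_op_bounded_linear bounded_op_diff)
    show "(\<lambda>n. onorm (\<lambda>x. F n x - B x) * norm x) \<longlonglongrightarrow> 0"
      using tendsto_mult_left_zero[OF assms(3)] by simp
  qed
  then show ?thesis
    by (simp add: LIM_zero_iff)
qed

lemma Cauchy_of_rate:
  fixes X :: "nat \<Rightarrow> 'a::metric_space"
  assumes "0 \<le> c" and rate: "\<And>n k. dist (X n) (X k) \<le> (1 / Suc n + 1 / Suc k) * c"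
  shows "Cauchy X"
proof (rule metric_CauchyI)
  fix e :: real
  assume "e > 0"
  obtain N :: nat where N: "2 * (c + 1) / e < N"
    using reals_Archimedean2 by blast
  have "0 < 2 * (c + 1) / e"
    using \<open>e > 0\<close> \<open>0 \<le> c\<close> by simp
  then have "N > 0"
    using N by linarith
  have "dist (X n) (X k) < e" if "N \<le> n" "N \<le> k" for n k
  proof -
    have "1 / Suc n \<le> 1 / N" "1 / Suc k \<le> 1 / N"
      using that \<open>N > 0\<close> by (simp_all add: frac_le)
    then have "(1 / Suc n + 1 / Suc k) * c \<le> (2 / N) * (c + 1)"
      using \<open>0 \<le> c\<close> by (intro mult_mono) auto
    also have "\<dots> < e"
      using N \<open>e > 0\<close> \<open>N > 0\<close> by (simp add: field_simps)
    finally show ?thesis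
      using rate[of n k] by simp
  qed
  then show "\<exists>N. \<forall>n\<ge>N. \<forall>k\<ge>N. dist (X n) (X k) < e"
    by blast
qed

lemma tendsto_cscale:
  "(X \<longlongrightarrow> L) F \<Longrightarrow> ((\<lambda>n. cscale c (X n :: 'a::complex_inner)) \<longlongrightarrow> cscale c L) F"
  by (rule bounded_linear.tendsto[OF bounded_op_bounded_linear[OF bounded_op_cscale]])

lemma bounded_op_pointwise_limit:
  assumes F: "\<And>n. bounded_op (F n)" and lim: "\<And>x. (\<lambda>n. F n x) \<longlonglongrightarrow> B x"
    and near: "\<And>x. norm (F 0 x - B x) \<le> c * norm x"
  shows "bounded_op B"
proof -
  have F_lin: "clinear_op (F n)" for n
    by (rule bounded_op_clinear_op[OF F])
  have "B (x + y) = B x + B y" for x y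
    using tendsto_add[OF lim[of x] lim[of y]] lim[of "x + y"] LIMSEQ_unique
    by (simp add: clinear_op_add[OF F_lin]) blast
  moreover have "B (cscale a x) = cscale a (B x)" for a x
    using tendsto_cscale[OF lim[of x], of a] lim[of "cscale a x"] LIMSEQ_unique
    by (simp add: clinear_op_cscale[OF F_lin]) blast
  moreover obtain K where K: "\<And>x. norm (F 0 x) \<le> K * norm x"
    using F[of 0] by (auto simp: bounded_op_def)
  moreover have "norm (B x) \<le> (K + c) * norm x" for x
    using near[of x] K[of x] norm_triangle_sub[of "B x" "F 0 x"]
    by (simp add: norm_minus_commute algebra_simps)
  ultimately show ?thesis
    by (auto simp: bounded_op_def clinear_op_def)
qed

locale hermitian_spectrum_in =
  fixes T :: "'a::chilbert_space \<Rightarrow> 'a" and m M :: real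
  assumes bounded: "bounded_op T" and hermitian: "hermitian_op T"
    and spectrum_subset: "op_spectrum T \<subseteq> {m..M}"
begin

lemma poly_op_dist_le:
  assumes "\<And>t. t \<in> op_spectrum T \<Longrightarrow> \<bar>poly p t - g t\<bar> \<le> a"
    and "\<And>t. t \<in> op_spectrum T \<Longrightarrow> \<bar>poly q t - g t\<bar> \<le> b"
  shows "norm (poly_op p T x - poly_op q T x) \<le> (a + b) * norm x"
proof -
  have "norm (poly_op (p - q) T x) \<le> (a + b) * norm x"
  proof (rule poly_op_norm_le[OF bounded hermitian])
    show "\<bar>poly (p - q) t\<bar> \<le> a + b" if "t \<in> op_spectrum T" for t
      using assms[OF that] by simp
  qed
  then show ?thesis
    by (simp add: poly_op_diff)
qed

lemma poly_op_limit_exists: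
  assumes Q: "\<And>n t. t \<in> op_spectrum T \<Longrightarrow> \<bar>poly (Q n) t - g t\<bar> \<le> 1 / Suc n"
  obtains B where "bounded_op B" "\<And>n x. norm (poly_op (Q n) T x - B x) \<le> norm x / Suc n"
proof -
  have dist: "norm (poly_op (Q n) T x - poly_op (Q k) T x) \<le> (1 / Suc n + 1 / Suc k) * norm x"
    for n k x
    using Q by (intro poly_op_dist_le)
  define B where "B x = lim (\<lambda>n. poly_op (Q n) T x)" for x
  have "Cauchy (\<lambda>n. poly_op (Q n) T x)" for x
    by (rule Cauchy_of_rate[OF norm_ge_zero[of x]]) (simp only: dist_norm dist)
  then have B: "(\<lambda>n. poly_op (Q n) T x) \<longlonglongrightarrow> B x" for x
    by (simp add: B_def Cauchy_convergent_iff convergent_LIMSEQ_iff)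
  have rate: "norm (poly_op (Q n) T x - B x) \<le> norm x / Suc n" for n x
  proof (rule tendsto_le[OF trivial_limit_sequentially])
    show "(\<lambda>k. norm (poly_op (Q n) T x - poly_op (Q k) T x)) \<longlonglongrightarrow> norm (poly_op (Q n) T x - B x)"
      by (intro tendsto_intros B)
    have "(\<lambda>k. (1 / Suc n + 1 / Suc k) * norm x) \<longlonglongrightarrow> (1 / Suc n + 0) * norm x"
      by (intro tendsto_intros LIMSEQ_Suc[OF lim_const_over_n])
    then show "(\<lambda>k. (1 / Suc n + 1 / Suc k) * norm x) \<longlonglongrightarrow> norm x / Suc n"
      by simp
  qed (use dist in simp)
  have "bounded_op B"
    using rate[of 0]
    by (intro bounded_op_pointwise_limit[OF bounded_op_poly_op[OF bounded] B, of 1]) simp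
  then show thesis
    using that rate by blast
qed

lemma onorm_poly_op_diff_le:
  assumes B: "bounded_op B" and QB: "\<And>x. norm (poly_op q T x - B x) \<le> c * norm x"
    and q: "\<And>t. t \<in> op_spectrum T \<Longrightarrow> \<bar>poly q t - g t\<bar> \<le> b"
    and p: "\<And>t. t \<in> op_spectrum T \<Longrightarrow> \<bar>poly p t - g t\<bar> \<le> a"
    and "0 \<le> a + b + c"
  shows "onorm (\<lambda>x. poly_op p T x - B x) \<le> a + b + c"
proof (rule onorm_bound)
  show "norm (poly_op p T x - B x) \<le> (a + b + c) * norm x" for x
    using norm_diff_triangle_le[OF poly_op_dist_le[OF p q] QB] by (simp add: algebra_simps)
qed fact

lemma is_cfc_exists:
  assumes "continuous_on {m..M} g"
  obtains B where "is_cfc T g B"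
proof -
  obtain Q where "\<And>n t. t \<in> {m..M} \<Longrightarrow> \<bar>poly (Q n) t - g t\<bar> \<le> 1 / Suc n"
    using poly_approximation_rate[OF assms] by blast
  then have Q: "\<And>n t. t \<in> op_spectrum T \<Longrightarrow> \<bar>poly (Q n) t - g t\<bar> \<le> 1 / Suc n"
    using spectrum_subset by blast
  obtain B where B: "bounded_op B" "\<And>n x. norm (poly_op (Q n) T x - B x) \<le> norm x / Suc n"
    using poly_op_limit_exists[OF Q] by blast
  have "(\<lambda>n. onorm (\<lambda>x. poly_op (P n) T x - B x)) \<longlonglongrightarrow> 0"
    if P: "poly_approximates P g (op_spectrum T)" for P
  proof (rule LIMSEQ_I)
    fix e :: real
    assume "e > 0"
    obtain N1 where N1: "\<And>n t. n \<ge> N1 \<Longrightarrow> t \<in> op_spectrum T \<Longrightarrow> \<bar>poly (P n) t - g t\<bar> < e / 4"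
      using P \<open>e > 0\<close> unfolding poly_approximates_def
      by (meson zero_less_divide_iff zero_less_numeral)
    obtain N2 :: nat where N2: "4 / e < N2"
      using reals_Archimedean2 by blast
    have "norm (onorm (\<lambda>x. poly_op (P n) T x - B x) - 0) < e" if "n \<ge> max N1 N2" for n
    proof -
      have "4 / e < real (Suc n)"
        using N2 that by simp
      then have small: "1 / real (Suc n) < e / 4"
        using \<open>e > 0\<close> by (simp add: field_simps)
      have "onorm (\<lambda>x. poly_op (P n) T x - B x) \<le> e / 4 + 1 / Suc n + 1 / Suc n"
        using N1 that \<open>e > 0\<close> B(2)[of n]
        by (intro onorm_poly_op_diff_le[OF B(1) _ Q]) (auto simp: less_imp_le mult.commute)
      moreover have "0 \<le> onorm (\<lambda>x. poly_op (P n) T x - B x)"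
        by (intro onorm_pos_le bounded_op_bounded_linear bounded_op_diff bounded_op_poly_op
            bounded B)
      ultimately show ?thesis
        using small \<open>e > 0\<close> by simp
    qed
    then show "\<exists>N. \<forall>n\<ge>N. norm (onorm (\<lambda>x. poly_op (P n) T x - B x) - 0) < e"
      by blast
  qed
  with B(1) have "is_cfc T g B"
    by (simp add: is_cfc_def)
  then show thesis
    by (rule that)
qed

lemma is_cfc_unique:
  assumes g: "continuous_on {m..M} g" and "is_cfc T g B" "is_cfc T g B'"
  shows "B = B'"
proof -
  obtain Q where "\<And>n t. t \<in> {m..M} \<Longrightarrow> \<bar>poly (Q n) t - g t\<bar> \<le> 1 / Suc n"
    using poly_approximation_rate[OF g] by blast
  then have "poly_approximates Q g (op_spectrum T)"
    using spectrum_subset by (intro poly_approximatesI_rate[of 1]) auto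
  then have "(\<lambda>n. poly_op (Q n) T x) \<longlonglongrightarrow> C x" if "is_cfc T g C" for C x
    using that by (intro onorm_tendsto_imp_tendsto bounded_op_poly_op bounded)
      (auto simp: is_cfc_def)
  then show ?thesis
    using assms(2,3) LIMSEQ_unique by blast
qed

lemma is_cfc_cfc: "continuous_on {m..M} g \<Longrightarrow> is_cfc T g (cfc T g)"
  unfolding cfc_eq_The by (metis is_cfc_exists is_cfc_unique theI)

lemma bounded_op_cfc: "continuous_on {m..M} g \<Longrightarrow> bounded_op (cfc T g)"
  using is_cfc_cfc by (simp add: is_cfc_def)

lemma cfc_tendsto:
  assumes "continuous_on {m..M} g" "poly_approximates P g {m..M}"
  shows "(\<lambda>n. poly_op (P n) T x) \<longlonglongrightarrow> cfc T g x"
  using is_cfc_cfc[OF assms(1)] poly_approximates_subset[OF assms(2) spectrum_subset]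
  by (intro onorm_tendsto_imp_tendsto bounded_op_poly_op bounded bounded_op_cfc assms(1))
    (simp add: is_cfc_def)

lemma cfc_approximation:
  assumes g: "continuous_on {m..M} g"
  obtains Q where "\<And>n t. t \<in> {m..M} \<Longrightarrow> \<bar>poly (Q n) t - g t\<bar> \<le> 1 / Suc n"
    "\<And>x. (\<lambda>n. poly_op (Q n) T x) \<longlonglongrightarrow> cfc T g x"
proof -
  obtain Q where Q: "\<And>n t. t \<in> {m..M} \<Longrightarrow> \<bar>poly (Q n) t - g t\<bar> \<le> 1 / Suc n"
    using poly_approximation_rate[OF g] by blast
  then show thesis
    using that cfc_tendsto[OF g poly_approximatesI_rate[OF zero_le_one Q]] by blast
qed

lemma cfc_add:
  assumes g: "continuous_on {m..M} g" and h: "continuous_on {m..M} h"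
  shows "cfc T (\<lambda>t. g t + h t) = (\<lambda>x. cfc T g x + cfc T h x)"
proof
  fix x
  obtain Q where Q: "\<And>n t. t \<in> {m..M} \<Longrightarrow> \<bar>poly (Q n) t - g t\<bar> \<le> 1 / Suc n"
    "(\<lambda>n. poly_op (Q n) T x) \<longlonglongrightarrow> cfc T g x"
    using cfc_approximation[OF g] by metis
  obtain R where R: "\<And>n t. t \<in> {m..M} \<Longrightarrow> \<bar>poly (R n) t - h t\<bar> \<le> 1 / Suc n"
    "(\<lambda>n. poly_op (R n) T x) \<longlonglongrightarrow> cfc T h x"
    using cfc_approximation[OF h] by metis
  have "poly_approximates (\<lambda>n. Q n + R n) (\<lambda>t. g t + h t) {m..M}"
  proof (rule poly_approximatesI_rate[of 2])
    show "\<bar>poly (Q n + R n) t - (g t + h t)\<bar> \<le> 2 / Suc n" if "t \<in> {m..M}" for n t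
      using Q(1)[OF that, of n] R(1)[OF that, of n] by simp
  qed simp
  then have "(\<lambda>n. poly_op (Q n + R n) T x) \<longlonglongrightarrow> cfc T (\<lambda>t. g t + h t) x"
    using g h by (intro cfc_tendsto continuous_intros)
  moreover have "(\<lambda>n. poly_op (Q n + R n) T x) \<longlonglongrightarrow> cfc T g x + cfc T h x"
    unfolding poly_op_add by (intro tendsto_add Q(2) R(2))
  ultimately show "cfc T (\<lambda>t. g t + h t) x = cfc T g x + cfc T h x"
    using LIMSEQ_unique by blast
qed

lemma cfc_scaleR:
  assumes g: "continuous_on {m..M} g"
  shows "cfc T (\<lambda>t. c * g t) = (\<lambda>x. c *\<^sub>R cfc T g x)"
proof
  fix x
  obtain Q where Q: "\<And>n t. t \<in> {m..M} \<Longrightarrow> \<bar>poly (Q n) t - g t\<bar> \<le> 1 / Suc n"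
    "(\<lambda>n. poly_op (Q n) T x) \<longlonglongrightarrow> cfc T g x"
    using cfc_approximation[OF g] by metis
  have "poly_approximates (\<lambda>n. smult c (Q n)) (\<lambda>t. c * g t) {m..M}"
  proof (rule poly_approximatesI_rate[of "\<bar>c\<bar>"])
    show "\<bar>poly (smult c (Q n)) t - c * g t\<bar> \<le> \<bar>c\<bar> / Suc n" if "t \<in> {m..M}" for n t
      using mult_left_mono[OF Q(1)[OF that, of n], of "\<bar>c\<bar>"]
      by (simp add: abs_mult right_diff_distrib[symmetric])
  qed simp
  then have "(\<lambda>n. poly_op (smult c (Q n)) T x) \<longlonglongrightarrow> cfc T (\<lambda>t. c * g t) x"
    using g by (intro cfc_tendsto continuous_intros)
  moreover have "(\<lambda>n. poly_op (smult c (Q n)) T x) \<longlonglongrightarrow> c *\<^sub>R cfc T g x"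
    unfolding poly_op_smult by (intro tendsto_scaleR tendsto_const Q(2))
  ultimately show "cfc T (\<lambda>t. c * g t) x = c *\<^sub>R cfc T g x"
    using LIMSEQ_unique by blast
qed

lemma cfc_poly: "cfc T (\<lambda>t. poly p t) = poly_op p T"
proof
  fix x
  have "(\<lambda>n. poly_op p T x) \<longlonglongrightarrow> cfc T (\<lambda>t. poly p t) x"
    using cfc_tendsto[of "\<lambda>t. poly p t" "\<lambda>n. p"]
    by (simp add: poly_approximates_def continuous_intros)
  then show "cfc T (\<lambda>t. poly p t) x = poly_op p T x"
    using LIMSEQ_unique tendsto_const by blast
qed

lemma cfc_id: "cfc T (\<lambda>t. t) = T"
  using cfc_poly[of "[:0, 1:]"]
  by (simp add: fun_eq_iff poly_op_linear bounded_op_clinear_op[OF bounded])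

lemma cfc_affine:
  assumes "continuous_on {m..M} g"
  shows "cfc T (\<lambda>t. a * g t + b) = (\<lambda>x. a *\<^sub>R cfc T g x + b *\<^sub>R x)"
proof -
  have "cfc T (\<lambda>t. b) = (\<lambda>x. b *\<^sub>R x)"
    using cfc_poly[of "[:b:]"] by (simp add: fun_eq_iff)
  moreover have "continuous_on {m..M} (\<lambda>t. a * g t)"
    using assms by (intro continuous_intros)
  ultimately show ?thesis
    using cfc_add[of "\<lambda>t. a * g t" "\<lambda>t. b"] cfc_scaleR[OF assms, of a] by simp
qed

lemma positive_op_cfc:
  assumes g: "continuous_on {m..M} g" and nonneg: "\<And>t. t \<in> {m..M} \<Longrightarrow> 0 \<le> g t"
  shows "positive_op (cfc T g)"
proof -
  obtain Q where Q: "\<And>n t. t \<in> {m..M} \<Longrightarrow> \<bar>poly (Q n) t - g t\<bar> \<le> 1 / Suc n"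
    using poly_approximation_rate[OF g] by blast
  \<comment> \<open>lift the approximants by their error, so that they are nonnegative on the spectrum\<close>
  define P where "P n = Q n + [:1 / Suc n:]" for n
  have "poly_approximates P g {m..M}"
  proof (rule poly_approximatesI_rate[of 2])
    show "\<bar>poly (P n) t - g t\<bar> \<le> 2 / Suc n" if "t \<in> {m..M}" for n t
    proof -
      have "\<bar>poly (P n) t - g t\<bar> \<le> 1 / Suc n + 1 / Suc n"
        using Q[OF that, of n] by (simp add: P_def abs_le_iff)
      then show ?thesis
        by simp
    qed
  qed simp
  then have lim: "(\<lambda>n. cinner x (poly_op (P n) T x)) \<longlonglongrightarrow> cinner x (cfc T g x)" for x
    by (intro bounded_linear.tendsto[OF bounded_linear_cinner_right] cfc_tendsto g)
  have "positive_op (poly_op (P n) T)" for n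
  proof (rule positive_op_poly_op[OF bounded hermitian])
    fix t
    assume "t \<in> op_spectrum T"
    then have "t \<in> {m..M}"
      using spectrum_subset by blast
    then show "0 \<le> poly (P n) t"
      using Q[of t n] nonneg[of t] by (simp add: P_def abs_le_iff)
  qed
  then have Im: "Im (cinner x (poly_op (P n) T x)) = 0"
    and Re: "0 \<le> Re (cinner x (poly_op (P n) T x))" for x n
    by (simp_all add: positive_op_def)
  show ?thesis
    unfolding positive_op_def
  proof (intro allI conjI)
    fix x
    show "Im (cinner x (cfc T g x)) = 0"
      using tendsto_Im[OF lim[of x]] by (simp add: Im LIMSEQ_const_iff)
    show "0 \<le> Re (cinner x (cfc T g x))"
      using tendsto_Re[OF lim[of x]] by (rule LIMSEQ_le_const) (use Re in blast)
  qed
qed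

lemma cfc_mono:
  assumes g: "continuous_on {m..M} g" and h: "continuous_on {m..M} h"
    and le: "\<And>t. t \<in> {m..M} \<Longrightarrow> g t \<le> h t"
  shows "op_le (cfc T g) (cfc T h)"
proof -
  have "positive_op (cfc T (\<lambda>t. h t + (- 1) * g t))"
    using g h le by (intro positive_op_cfc continuous_intros) auto
  moreover have "cfc T (\<lambda>t. h t + (- 1) * g t) = (\<lambda>x. cfc T h x - cfc T g x)"
    using cfc_add[OF h, of "\<lambda>t. (- 1) * g t"] cfc_scaleR[OF g, of "- 1"] g
    by (simp add: continuous_intros)
  ultimately show ?thesis
    by (simp add: op_le_iff_positive_op)
qed

end

lemma hermitian_spectrum_inI:
  assumes "bounded_op T" "op_le (scal_op m) T" "op_le T (scal_op M)"
  shows "hermitian_spectrum_in T m M"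
proof
  show "bounded_op T"
    by fact
  show "hermitian_op T"
    by (rule hermitian_op_of_op_le_scal_op[OF assms(1,2)])
  show "op_spectrum T \<subseteq> {m..M}"
    by (rule op_spectrum_subset_of_op_le[OF assms])
qed

section \<open>Scalar inequalities\<close>

lemma a_f_b_f_endpoints:
  assumes "m < M"
  shows "a_f f m M * m + b_f f m M = f m" "a_f f m M * M + b_f f m M = f M"
    and "a_f f m M * ((m + M) / 2) + b_f f m M = (f m + f M) / 2"
proof -
  have "M - m \<noteq> 0"
    using assms by simp
  moreover have
    "a_f f m M * s + b_f f m M = ((f M - f m) * s + (M * f m - m * f M)) / (M - m)" for s
    by (simp add: a_f_def b_f_def add_divide_distrib)
  ultimately show m: "a_f f m M * m + b_f f m M = f m" and M: "a_f f m M * M + b_f f m M = f M"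
    by (simp_all add: divide_eq_eq algebra_simps)
  then show "a_f f m M * ((m + M) / 2) + b_f f m M = (f m + f M) / 2"
    by (simp add: add_divide_distrib distrib_left; linarith)
qed

text \<open>Jensen's inequality on the half of \<open>[m, M]\<close> containing \<open>t\<close>, between its endpoint and the
  midpoint, improves the chord bound by the correction term defining \<open>X_min\<close>.\<close>

lemma convex_on_refined_chord:
  fixes f :: "real \<Rightarrow> real"
  assumes "m < M" and convex: "convex_on {m..M} f" and t: "t \<in> {m..M}"
  shows "f t + 2 * min (t - m) (M - t) / (M - m) * ((f m + f M) / 2 - f ((m + M) / 2))
    \<le> a_f f m M * t + b_f f m M"
proof -
  define c where "c = (m + M) / 2"
  define l where "l = 2 * min (t - m) (M - t) / (M - m)"
  define chord where "chord s = a_f f m M * s + b_f f m M" for s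
  have l: "0 \<le> l" "l \<le> 1"
    using \<open>m < M\<close> t by (auto simp: l_def min_def field_simps)
  obtain e where e: "e = m \<or> e = M" "t = (1 - l) * e + l * c"
  proof (cases "t \<le> c")
    case True
    then have "l * (c - m) = t - m"
      using \<open>m < M\<close> by (simp add: l_def c_def min_def field_simps)
    then show thesis
      using that[of m] by (simp add: algebra_simps)
  next
    case False
    then have "l * (M - c) = M - t"
      using \<open>m < M\<close> by (simp add: l_def c_def min_def field_simps)
    then show thesis
      using that[of M] by (simp add: algebra_simps)
  qed
  have "e \<in> {m..M}" "c \<in> {m..M}"
    using e(1) \<open>m < M\<close> by (auto simp: c_def)
  then have "f ((1 - l) * e + l * c) \<le> (1 - l) * f e + l * f c"
    using convex_onD[OF convex, of l e c] l by simp
  then have "f t \<le> (1 - l) * f e + l * f c"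
    using e(2) by simp
  moreover have "chord t = (1 - l) * chord e + l * chord c"
    by (simp add: chord_def e(2) algebra_simps)
  moreover have "chord e = f e" "chord c = (f m + f M) / 2"
    using e(1) a_f_b_f_endpoints[OF \<open>m < M\<close>, of f] by (auto simp: chord_def c_def)
  ultimately have "f t + l * ((f m + f M) / 2 - f c) \<le> chord t"
    by (simp only: right_diff_distrib)
  then show ?thesis
    unfolding chord_def l_def c_def .
qed

lemma mono_on_has_real_derivative_nonneg:
  assumes mono: "mono_on {m..M} f" and t0: "t0 \<in> {m<..<M}"
    and der: "(f has_real_derivative d) (at t0)"
  shows "0 \<le> d"
proof (rule ccontr)
  assume "\<not> 0 \<le> d"
  then obtain e where e: "e > 0" "\<And>h. 0 < h \<Longrightarrow> h < e \<Longrightarrow> f (t0 + h) < f t0"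
    using DERIV_neg_dec_right[OF der] by force
  define h where "h = min (e / 2) (M - t0)"
  have "0 < h" "h < e" "t0 + h \<le> M"
    using e(1) t0 by (auto simp: h_def)
  then have "f t0 \<le> f (t0 + h)"
    using t0 by (intro mono_onD[OF mono]) auto
  then show False
    using e(2)[OF \<open>0 < h\<close> \<open>h < e\<close>] by simp
qed

lemma antimono_on_has_real_derivative_nonpos:
  assumes anti: "antimono_on {m..M} f" and t0: "t0 \<in> {m<..<M}"
    and der: "(f has_real_derivative d) (at t0)"
  shows "d \<le> 0"
proof (rule ccontr)
  assume "\<not> d \<le> 0"
  then obtain e where e: "e > 0" "\<And>h. 0 < h \<Longrightarrow> h < e \<Longrightarrow> f t0 < f (t0 + h)"
    using DERIV_pos_inc_right[OF der] by force
  define h where "h = min (e / 2) (M - t0)"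
  have "0 < h" "h < e" "t0 + h \<le> M"
    using e(1) t0 by (auto simp: h_def)
  then have "f (t0 + h) \<le> f t0"
    using t0 by (intro monotone_onD[OF anti]) auto
  then show False
    using e(2)[OF \<open>0 < h\<close> \<open>h < e\<close>] by simp
qed

lemma alpha_f_nonneg:
  fixes f :: "real \<Rightarrow> real"
  assumes "m < M" and mono: "mono_on {m..M} f \<or> antimono_on {m..M} f"
    and t0: "t0 \<in> {m<..<M}" and "f differentiable (at t0)"
  shows "0 \<le> alpha_f f m M t0"
proof -
  have der: "(f has_real_derivative deriv f t0) (at t0)"
    using \<open>f differentiable (at t0)\<close> by (simp add: DERIV_deriv_iff_real_differentiable)
  have m: "m \<in> {m..M}" and M: "M \<in> {m..M}"
    using \<open>m < M\<close> by auto
  from mono show ?thesis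
  proof
    assume mono: "mono_on {m..M} f"
    then have "0 \<le> a_f f m M"
      using mono_onD[OF mono m M] \<open>m < M\<close> by (simp add: a_f_def)
    then show ?thesis
      using mono_on_has_real_derivative_nonneg[OF mono t0 der] by (simp add: alpha_f_def)
  next
    assume anti: "antimono_on {m..M} f"
    then have "a_f f m M \<le> 0"
      using monotone_onD[OF anti m M] \<open>m < M\<close> by (simp add: a_f_def divide_nonpos_pos)
    then show ?thesis
      using antimono_on_has_real_derivative_nonpos[OF anti t0 der]
      by (simp add: alpha_f_def divide_nonpos_nonpos)
  qed
qed

text \<open>The tangent line at \<open>t0\<close>, rescaled by \<open>alpha_f \<ge> 0\<close> so that its slope becomes \<open>a_f\<close>.\<close>

lemma chord_le_alpha_beta:
  fixes f :: "real \<Rightarrow> real"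
  assumes "m < M" and convex: "convex_on {m..M} f"
    and mono: "mono_on {m..M} f \<or> antimono_on {m..M} f"
    and t0: "t0 \<in> {m<..<M}" and df: "f differentiable (at t0)" and d0: "deriv f t0 \<noteq> 0"
    and t: "t \<in> {m..M}"
  shows "a_f f m M * t + b_f f m M \<le> alpha_f f m M t0 * f t + beta_f f m M t0"
proof -
  have "(f has_field_derivative deriv f t0) (at t0 within {m..M})"
    using df
    by (simp add: DERIV_deriv_iff_real_differentiable[symmetric] has_field_derivative_at_within)
  then have "deriv f t0 * (t - t0) \<le> f t - f t0"
    using convex_on_imp_above_tangent[OF convex connected_Icc _ t] t0 by simp
  then have "alpha_f f m M t0 * (deriv f t0 * (t - t0)) \<le> alpha_f f m M t0 * (f t - f t0)"
    by (rule mult_left_mono[OF _ alpha_f_nonneg[OF assms(1,3-5)]])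
  then show ?thesis
    using d0 by (simp add: alpha_f_def beta_f_def algebra_simps diff_divide_distrib)
qed

section \<open>Positive unital linear maps\<close>

context
  fixes \<phi> :: "('a::complex_inner \<Rightarrow> 'a) \<Rightarrow> ('b::complex_inner \<Rightarrow> 'b)"
  assumes \<phi>: "positive_unital_linear_map \<phi>"
begin

lemma positive_map_bounded: "bounded_op X \<Longrightarrow> bounded_op (\<phi> X)"
  using \<phi> by (simp add: positive_unital_linear_map_def)

lemma positive_map_add:
  "bounded_op X \<Longrightarrow> bounded_op Y \<Longrightarrow> \<phi> (\<lambda>x. X x + Y x) = (\<lambda>y. \<phi> X y + \<phi> Y y)"
  using \<phi> by (simp add: positive_unital_linear_map_def)

lemma positive_map_scaleR: "bounded_op X \<Longrightarrow> \<phi> (\<lambda>x. r *\<^sub>R X x) = (\<lambda>y. r *\<^sub>R \<phi> X y)"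
  using \<phi> by (simp add: positive_unital_linear_map_def scaleR_cscale)

lemma positive_map_affine:
  assumes "bounded_op X"
  shows "\<phi> (\<lambda>x. a *\<^sub>R X x + b *\<^sub>R x) = (\<lambda>y. a *\<^sub>R \<phi> X y + b *\<^sub>R y)"
proof -
  have "\<phi> (\<lambda>x. b *\<^sub>R x) = (\<lambda>y. b *\<^sub>R y)"
    using positive_map_scaleR[OF bounded_op_id, of b] \<phi>
    by (simp add: positive_unital_linear_map_def)
  then show ?thesis
    using positive_map_add[OF bounded_op_scaleR[OF assms] bounded_op_scaleR[OF bounded_op_id]]
    by (simp add: positive_map_scaleR[OF assms])
qed

lemma positive_map_scal_op: "\<phi> (scal_op c) = scal_op c"
  using positive_map_affine[OF bounded_op_zero, of 0 c] by (simp add: scal_op_def)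

lemma positive_map_mono:
  assumes X: "bounded_op X" and Y: "bounded_op Y" and "op_le X Y"
  shows "op_le (\<phi> X) (\<phi> Y)"
proof -
  have "\<phi> (\<lambda>x. Y x - X x) = (\<lambda>y. \<phi> Y y - \<phi> X y)"
    using positive_map_add[OF Y bounded_op_scaleR[OF X, of "- 1"]]
    unfolding positive_map_scaleR[OF X] by simp
  moreover have "op_le (\<lambda>x. 0) (\<lambda>x. Y x - X x)"
    using \<open>op_le X Y\<close> by (simp add: op_le_def)
  then have "op_le (\<lambda>y. 0) (\<phi> (\<lambda>x. Y x - X x))"
    using \<phi> bounded_op_diff[OF Y X] by (simp add: positive_unital_linear_map_def)
  ultimately show ?thesis
    by (simp add: op_le_def)
qed

end

lemma hermitian_spectrum_in_positive_map:
  fixes \<phi> :: "('a::chilbert_space \<Rightarrow> 'a) \<Rightarrow> ('b::chilbert_space \<Rightarrow> 'b)"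
  assumes \<phi>: "positive_unital_linear_map \<phi>"
    and A: "bounded_op A" "op_le (scal_op m) A" "op_le A (scal_op M)"
  shows "hermitian_spectrum_in (\<phi> A) m M"
proof (rule hermitian_spectrum_inI)
  show "bounded_op (\<phi> A)"
    by (rule positive_map_bounded[OF \<phi> A(1)])
  show "op_le (scal_op m) (\<phi> A)" "op_le (\<phi> A) (scal_op M)"
    using positive_map_mono[OF \<phi> bounded_op_scal_op A(1) A(2)]
      positive_map_mono[OF \<phi> A(1) bounded_op_scal_op A(3)]
    by (simp_all add: positive_map_scal_op[OF \<phi>])
qed

text \<open>The affine separator is where \<open>\<phi>\<close> and the functional calculus meet:
  \<open>\<phi> (a A + b) = a \<phi> A + b\<close>.\<close>

lemma positive_map_cfc_le_of_affine_separation: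
  fixes \<phi> :: "('a::chilbert_space \<Rightarrow> 'a) \<Rightarrow> ('b::chilbert_space \<Rightarrow> 'b)"
  assumes \<phi>: "positive_unital_linear_map \<phi>"
    and A: "bounded_op A" "op_le (scal_op m) A" "op_le A (scal_op M)"
    and g: "continuous_on {m..M} g" and h: "continuous_on {m..M} h"
    and sep: "\<And>t. t \<in> {m..M} \<Longrightarrow> g t \<le> a * t + b \<and> a * t + b \<le> h t"
  shows "op_le (\<phi> (cfc A g)) (cfc (\<phi> A) h)" "op_le (cfc (\<phi> A) g) (\<phi> (cfc A h))"
proof -
  interpret A: hermitian_spectrum_in A m M
    by (rule hermitian_spectrum_inI[OF A])
  interpret \<phi>A: hermitian_spectrum_in "\<phi> A" m M
    by (rule hermitian_spectrum_in_positive_map[OF \<phi> A])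
  have affine: "continuous_on {m..M} (\<lambda>t. a * t + b)"
    by (intro continuous_intros)
  have \<phi>_affine: "\<phi> (cfc A (\<lambda>t. a * t + b)) = cfc (\<phi> A) (\<lambda>t. a * t + b)"
    using A.cfc_affine[of "\<lambda>t. t"] \<phi>A.cfc_affine[of "\<lambda>t. t"] positive_map_affine[OF \<phi> A(1)]
    by (simp add: A.cfc_id \<phi>A.cfc_id)
  have "op_le (\<phi> (cfc A g)) (\<phi> (cfc A (\<lambda>t. a * t + b)))"
    using sep by (intro positive_map_mono[OF \<phi>] A.bounded_op_cfc A.cfc_mono g affine) auto
  moreover have "op_le (cfc (\<phi> A) (\<lambda>t. a * t + b)) (cfc (\<phi> A) h)"
    using sep by (intro \<phi>A.cfc_mono h affine) auto
  ultimately show "op_le (\<phi> (cfc A g)) (cfc (\<phi> A) h)"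
    unfolding \<phi>_affine by (rule op_le_trans)
  have "op_le (cfc (\<phi> A) g) (cfc (\<phi> A) (\<lambda>t. a * t + b))"
    using sep by (intro \<phi>A.cfc_mono g affine) auto
  moreover have "op_le (\<phi> (cfc A (\<lambda>t. a * t + b))) (\<phi> (cfc A h))"
    using sep by (intro positive_map_mono[OF \<phi>] A.bounded_op_cfc A.cfc_mono h affine) auto
  ultimately show "op_le (cfc (\<phi> A) g) (\<phi> (cfc A h))"
    unfolding \<phi>_affine by (rule op_le_trans)
qed

theorem proposition3p1:
  fixes f :: "real \<Rightarrow> real" and m M t0 :: real
    and A :: "'a::chilbert_space \<Rightarrow> 'a"
    and \<phi> :: "('a \<Rightarrow> 'a) \<Rightarrow> ('b::chilbert_space \<Rightarrow> 'b)"
  assumes "0 < m" and "m < M"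
    and "\<forall>t\<in>{m..M}. 0 < f t"
    and "continuous_on {m..M} f"
    and "convex_on {m..M} f"
    and "mono_on {m..M} f \<or> antimono_on {m..M} f"
    and "bounded_op A" and "op_le (scal_op m) A" and "op_le A (scal_op M)"
    and "positive_unital_linear_map \<phi>"
    and "t0 \<in> {m<..<M}" and "f differentiable (at t0)" and "deriv f t0 \<noteq> 0"
  shows "op_le (\<lambda>y. \<phi> (cfc A f) y + \<phi> (op_min f m M A) y)
               (\<lambda>y. alpha_f f m M t0 *\<^sub>R cfc (\<phi> A) f y + beta_f f m M t0 *\<^sub>R y) \<and>
         op_le (\<lambda>y. cfc (\<phi> A) f y + op_min f m M (\<phi> A) y)
               (\<lambda>y. alpha_f f m M t0 *\<^sub>R \<phi> (cfc A f) y + beta_f f m M t0 *\<^sub>R y)"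
proof -
  note f = assms(4) and A = assms(7-9) and \<phi> = assms(10)
  define x_min where
    "x_min = (\<lambda>t. 2 * min (t - m) (M - t) / (M - m) * ((f m + f M) / 2 - f ((m + M) / 2)))"
  interpret A: hermitian_spectrum_in A m M
    by (rule hermitian_spectrum_inI[OF A])
  interpret \<phi>A: hermitian_spectrum_in "\<phi> A" m M
    by (rule hermitian_spectrum_in_positive_map[OF \<phi> A])
  have x_min_cont: "continuous_on {m..M} x_min"
    unfolding x_min_def by (intro continuous_intros) (use \<open>m < M\<close> in simp)
  have sep: "f t + x_min t \<le> a_f f m M * t + b_f f m M \<and>
      a_f f m M * t + b_f f m M \<le> alpha_f f m M t0 * f t + beta_f f m M t0" if "t \<in> {m..M}" for t
    using convex_on_refined_chord[OF assms(2,5) that]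
      chord_le_alpha_beta[OF assms(2,5,6,11-13) that]
    by (simp add: x_min_def)
  have "continuous_on {m..M} (\<lambda>t. f t + x_min t)"
    "continuous_on {m..M} (\<lambda>t. alpha_f f m M t0 * f t + beta_f f m M t0)"
    by (intro continuous_intros f x_min_cont)+
  from positive_map_cfc_le_of_affine_separation[OF \<phi> A this sep]
  show ?thesis
    unfolding op_min_def x_min_def[symmetric] A.cfc_add[OF f x_min_cont] \<phi>A.cfc_add[OF f x_min_cont]
      A.cfc_affine[OF f] \<phi>A.cfc_affine[OF f] positive_map_affine[OF \<phi> A.bounded_op_cfc[OF f]]
      positive_map_add[OF \<phi> A.bounded_op_cfc[OF f] A.bounded_op_cfc[OF x_min_cont]]
    by blast
qed

end
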